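(* The map $\bar\beta\colon\mathrm{Aut}_M(\overline{\mathbb U})\to\mathrm{Aut}(\mathcal B_{\mathbb U})$ is an isomorphism of Polish groups.
   Context: $\mathbb U$ is the countable rational Urysohn ultrametric space viewed as a two-sorted ultrametric space with distance set $\mathbb Q_{\ge0}$, and $\overline{\mathbb U}$ is its Cauchy completion (same distance set). A dc-automorphism of a space $X$ is a bijection $f$ of points with an order automorphism $D_f$ of the distance set fixing $0$ with $d(f(x),f(y))=D_f(d(x,y))$. $\mathrm{Aut}_M(X)$ is the group of dc-automorphisms with basic neighbourhoods $N_{A,r}(f)=\{g:d(g(x),f(x))<r\ \forall x\in A\}$, $A$ finite, $r>0$. For $x\ne y$ put $B(x,y)=\{z:d(z,x)<d(x,y)\}$. $\mathcal B_{\mathbb U}=\{B(x,y):x\ne y\in\mathbb U\}$ is the structure with order $\supseteq$, adjacency relation $B\sim B'$ iff $B\ne B'$ and $B=B(x,y)$, $B'=B(y,x)$ for some $x,y$, level set $\mathbb Q_{\ge0}$ and level map $r(B(x,y))=d(x,y)$. $\mathrm{Aut}(\mathcal B_{\mathbb U})$ consists of bijections $g$ of $\mathcal B_{\mathbb U}$ preserving and reflecting $\subseteq$ and $\sim$, together with an order automorphism $\ell_g$ of $\mathbb Q_{\ge 0}$ with $r(g(B))=\ell_g(r(B))$, with the topology of pointwise convergence (both sorts discrete). For $f\in\mathrm{Aut}_M(\overline{\mathbb U})$, $\bar\beta(f)$ is given by $B_{\mathbb U}(x,y)\mapsto B_{\overline{\mathbb U}}(f(x),f(y))\cap\mathbb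 U$ for $x\ne y\in\mathbb U$, with level part $D_f$. *)

theory Defs
  imports "HOL-Analysis.Analysis" "HOL-Algebra.Group"
begin

text \<open>A space is a carrier set S of points of type 'a with a distance
function d into the rationals (the distance sort is the set of nonnegative rationals).\<close>

definition rat_ultrametric :: "'a set \<Rightarrow> ('a \<Rightarrow> 'a \<Rightarrow> rat) \<Rightarrow> bool" where
  "rat_ultrametric S d \<longleftrightarrow>
     (\<forall>x\<in>S. \<forall>y\<in>S. d x y \<ge> 0 \<and> (d x y = 0 \<longleftrightarrow> x = y) \<and> d x y = d y x) \<and>
     (\<forall>x\<in>S. \<forall>y\<in>S. \<forall>z\<in>S. d x z \<le> max (d x y) (d y z))"

text \<open>Extension property (Katetov/Fraisse): every one-point ultrametric extension
of a finite subset with rational distances is realised inside S.\<close>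

definition ultra_extension_property :: "'a set \<Rightarrow> ('a \<Rightarrow> 'a \<Rightarrow> rat) \<Rightarrow> bool" where
  "ultra_extension_property S d \<longleftrightarrow>
     (\<forall>A h. finite A \<and> A \<subseteq> S \<and> (\<forall>a\<in>A. h a > 0) \<and>
        (\<forall>a\<in>A. \<forall>b\<in>A. h a \<le> max (h b) (d b a) \<and> d a b \<le> max (h a) (h b))
      \<longrightarrow> (\<exists>z\<in>S. \<forall>a\<in>A. d z a = h a))"

text \<open>The countable rational Urysohn ultrametric space (characterised up to isometry).\<close>

definition rational_Urysohn_ultrametric :: "'a set \<Rightarrow> ('a \<Rightarrow> 'a \<Rightarrow> rat) \<Rightarrow> bool" where
  "rational_Urysohn_ultrametric S d \<longleftrightarrow>
     countable S \<and> rat_ultrametric S d \<and> ultra_extension_property S d"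

definition rat_cauchy :: "'a set \<Rightarrow> ('a \<Rightarrow> 'a \<Rightarrow> rat) \<Rightarrow> (nat \<Rightarrow> 'a) \<Rightarrow> bool" where
  "rat_cauchy X d s \<longleftrightarrow> (\<forall>n. s n \<in> X) \<and>
     (\<forall>e>0. \<exists>N. \<forall>m\<ge>N. \<forall>n\<ge>N. d (s m) (s n) < e)"

definition rat_converges :: "'a set \<Rightarrow> ('a \<Rightarrow> 'a \<Rightarrow> rat) \<Rightarrow> (nat \<Rightarrow> 'a) \<Rightarrow> 'a \<Rightarrow> bool" where
  "rat_converges X d s x \<longleftrightarrow> x \<in> X \<and> (\<forall>e>0. \<exists>N. \<forall>n\<ge>N. d (s n) x < e)"

definition is_completion :: "'a set \<Rightarrow> 'a set \<Rightarrow> ('a \<Rightarrow> 'a \<Rightarrow> rat) \<Rightarrow> bool" where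
  "is_completion U X d \<longleftrightarrow>
     U \<subseteq> X \<and> rat_ultrametric X d \<and>
     (\<forall>x\<in>X. \<forall>e>0. \<exists>u\<in>U. d x u < e) \<and>
     (\<forall>s. rat_cauchy X d s \<longrightarrow> (\<exists>x. rat_converges X d s x))"

definition dist_order_aut :: "(rat \<Rightarrow> rat) \<Rightarrow> bool" where
  "dist_order_aut D \<longleftrightarrow> bij_betw D {q. q \<ge> 0} {q. q \<ge> 0} \<and>
     (\<forall>p\<ge>0. \<forall>q\<ge>0. p \<le> q \<longleftrightarrow> D p \<le> D q) \<and> (\<forall>q<0. D q = q)"

definition dc_aut :: "'a set \<Rightarrow> ('a \<Rightarrow> 'a \<Rightarrow> rat) \<Rightarrow> ('a \<Rightarrow> 'a) \<times> (rat \<Rightarrow> rat) \<Rightarrow> bool" where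
  "dc_aut X d p \<longleftrightarrow> bij_betw (fst p) X X \<and> (\<forall>x. x \<notin> X \<longrightarrow> fst p x = x) \<and>
     dist_order_aut (snd p) \<and> snd p 0 = 0 \<and>
     (\<forall>x\<in>X. \<forall>y\<in>X. d (fst p x) (fst p y) = snd p (d x y))"

definition AutM :: "'a set \<Rightarrow> ('a \<Rightarrow> 'a \<Rightarrow> rat) \<Rightarrow> (('a \<Rightarrow> 'a) \<times> (rat \<Rightarrow> rat)) monoid" where
  "AutM X d = \<lparr>carrier = {p. dc_aut X d p},
               mult = (\<lambda>p q. (fst p \<circ> fst q, snd p \<circ> snd q)),
               one = (id, id)\<rparr>"

definition AutM_nbhd :: "'a set \<Rightarrow> ('a \<Rightarrow> 'a \<Rightarrow> rat) \<Rightarrow> 'a set \<Rightarrow> rat \<Rightarrow> ('a \<Rightarrow> 'a) \<times> (rat \<Rightarrow> rat)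
     \<Rightarrow> (('a \<Rightarrow> 'a) \<times> (rat \<Rightarrow> rat)) set" where
  "AutM_nbhd X d A r p = {q \<in> carrier (AutM X d). \<forall>x\<in>A. d (fst q x) (fst p x) < r}"

definition AutM_topology :: "'a set \<Rightarrow> ('a \<Rightarrow> 'a \<Rightarrow> rat) \<Rightarrow> (('a \<Rightarrow> 'a) \<times> (rat \<Rightarrow> rat)) topology" where
  "AutM_topology X d = topology_generated_by
     {AutM_nbhd X d A r p | A r p. finite A \<and> A \<subseteq> X \<and> r > 0 \<and> p \<in> carrier (AutM X d)}"

definition ball_in :: "'a set \<Rightarrow> ('a \<Rightarrow> 'a \<Rightarrow> rat) \<Rightarrow> 'a \<Rightarrow> 'a \<Rightarrow> 'a set" where
  "ball_in S d x y = {z \<in> S. d z x < d x y}"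

definition balls :: "'a set \<Rightarrow> ('a \<Rightarrow> 'a \<Rightarrow> rat) \<Rightarrow> 'a set set" where
  "balls S d = {ball_in S d x y | x y. x \<in> S \<and> y \<in> S \<and> x \<noteq> y}"

definition ball_adj :: "'a set \<Rightarrow> ('a \<Rightarrow> 'a \<Rightarrow> rat) \<Rightarrow> 'a set \<Rightarrow> 'a set \<Rightarrow> bool" where
  "ball_adj S d B B' \<longleftrightarrow> B \<noteq> B' \<and>
     (\<exists>x\<in>S. \<exists>y\<in>S. x \<noteq> y \<and> B = ball_in S d x y \<and> B' = ball_in S d y x)"

definition ball_level :: "'a set \<Rightarrow> ('a \<Rightarrow> 'a \<Rightarrow> rat) \<Rightarrow> 'a set \<Rightarrow> rat" where
  "ball_level S d B = (THE q. \<exists>x\<in>S. \<exists>y\<in>S. x \<noteq> y \<and> B = ball_in S d x y \<and> q = d x y)"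

definition ball_aut :: "'a set \<Rightarrow> ('a \<Rightarrow> 'a \<Rightarrow> rat) \<Rightarrow> ('a set \<Rightarrow> 'a set) \<times> (rat \<Rightarrow> rat) \<Rightarrow> bool" where
  "ball_aut S d p \<longleftrightarrow>
     bij_betw (fst p) (balls S d) (balls S d) \<and> (\<forall>B. B \<notin> balls S d \<longrightarrow> fst p B = B) \<and>
     (\<forall>B\<in>balls S d. \<forall>B'\<in>balls S d. B \<subseteq> B' \<longleftrightarrow> fst p B \<subseteq> fst p B') \<and>
     (\<forall>B\<in>balls S d. \<forall>B'\<in>balls S d. ball_adj S d B B' \<longleftrightarrow> ball_adj S d (fst p B) (fst p B')) \<and>
     dist_order_aut (snd p) \<and>
     (\<forall>B\<in>balls S d. ball_level S d (fst p B) = snd p (ball_level S d B))"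

definition AutB :: "'a set \<Rightarrow> ('a \<Rightarrow> 'a \<Rightarrow> rat) \<Rightarrow> (('a set \<Rightarrow> 'a set) \<times> (rat \<Rightarrow> rat)) monoid" where
  "AutB S d = \<lparr>carrier = {p. ball_aut S d p},
               mult = (\<lambda>p q. (fst p \<circ> fst q, snd p \<circ> snd q)),
               one = (id, id)\<rparr>"

text \<open>Pointwise convergence topology, both sorts discrete (subbasis).\<close>

definition AutB_topology :: "'a set \<Rightarrow> ('a \<Rightarrow> 'a \<Rightarrow> rat) \<Rightarrow> (('a set \<Rightarrow> 'a set) \<times> (rat \<Rightarrow> rat)) topology" where
  "AutB_topology S d = topology_generated_by
     ({carrier (AutB S d)} \<union>
      {{p \<in> carrier (AutB S d). fst p B = C} | B C. B \<in> balls S d} \<union>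
      {{p \<in> carrier (AutB S d). snd p q = s} | q s. q \<ge> 0})"

definition beta_bar :: "'a set \<Rightarrow> 'a set \<Rightarrow> ('a \<Rightarrow> 'a \<Rightarrow> rat) \<Rightarrow> ('a \<Rightarrow> 'a) \<times> (rat \<Rightarrow> rat)
     \<Rightarrow> ('a set \<Rightarrow> 'a set) \<times> (rat \<Rightarrow> rat)" where
  "beta_bar U X d p =
     ((\<lambda>B. if B \<in> balls U d then
             (SOME B'. \<exists>x\<in>U. \<exists>y\<in>U. x \<noteq> y \<and> B = ball_in U d x y \<and>
                         B' = ball_in X d (fst p x) (fst p y) \<inter> U)
           else B),
      snd p)"

definition Polish_space_top :: "'a topology \<Rightarrow> bool" where
  "Polish_space_top T \<longleftrightarrow> completely_metrizable_space T \<and> separable_space T"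

definition topological_group :: "('a, 'b) monoid_scheme \<Rightarrow> 'a topology \<Rightarrow> bool" where
  "topological_group G T \<longleftrightarrow> group G \<and> topspace T = carrier G \<and>
     continuous_map (prod_topology T T) T (\<lambda>(a, b). a \<otimes>\<^bsub>G\<^esub> b) \<and>
     continuous_map T T (\<lambda>a. inv\<^bsub>G\<^esub> a)"

definition Polish_group :: "('a, 'b) monoid_scheme \<Rightarrow> 'a topology \<Rightarrow> bool" where
  "Polish_group G T \<longleftrightarrow> topological_group G T \<and> Polish_space_top T"

definition Polish_group_iso ::
  "('a, 'c) monoid_scheme \<Rightarrow> 'a topology \<Rightarrow> ('b, 'd) monoid_scheme \<Rightarrow> 'b topology \<Rightarrow> ('a \<Rightarrow> 'b) \<Rightarrow> bool" where
  "Polish_group_iso G T H S h \<longleftrightarrow> Polish_group G T \<and> Polish_group H S \<and>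
     h \<in> iso G H \<and> homeomorphic_map T S h"

end

theory Submission
  imports Defs
begin

text \<open>
  The balls of \<open>U\<close> are exactly the traces on \<open>U\<close> of the open balls of the completion with
  centre \<open>c \<in> X\<close> and radius \<open>r > 0\<close>, and two of them coincide iff the radii agree and the
  centres are closer than the radius. So a dc-automorphism \<open>(f, D)\<close> acts on balls by
  \<open>B(c, r) \<mapsto> B(f c, D r)\<close>, preserving inclusion, adjacency and levels. Conversely, an
  automorphism \<open>(g, l)\<close> of the ball structure sends the balls of radii \<open>r \<rightarrow> 0\<close> about a point
  \<open>x \<in> X\<close> to balls whose centres form a Cauchy sequence; by completeness its limit is the image
  of \<open>x\<close>, and this point map is the dc-automorphism inducing \<open>(g, l)\<close>.

  A basic neighbourhood of \<open>(f, D)\<close> in \<open>AutM\<close> is matched by prescribing one value of \<open>D\<close> and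
  the images of finitely many balls, so \<open>beta_bar\<close> is a homeomorphism. Finally \<open>AutB\<close> is Polish:
  it is second countable, and coding an automorphism by \<open>g\<close>, \<open>g\<^sup>-\<^sup>1\<close> and \<open>l\<close> identifies it with a
  closed subspace of a countable product of countable discrete spaces; the topological group
  structure and Polishness are transported to \<open>AutM\<close> along \<open>beta_bar\<close>.
\<close>


lemma dist_order_autD:
  assumes "dist_order_aut D"
  shows "bij_betw D {q. 0 \<le> q} {q. 0 \<le> q}" "\<And>q. q \<notin> {q. 0 \<le> q} \<Longrightarrow> D q = q"
    and "\<And>p. 0 \<le> p \<Longrightarrow> 0 \<le> D p"
  using assms unfolding dist_order_aut_def bij_betw_def by auto

lemma dist_order_aut_le_iff:
  "dist_order_aut D \<Longrightarrow> 0 \<le> p \<Longrightarrow> 0 \<le> q \<Longrightarrow> D p \<le> D q \<longleftrightarrow> p \<le> q"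
  unfolding dist_order_aut_def by blast

lemma dist_order_aut_less_iff:
  "dist_order_aut D \<Longrightarrow> 0 \<le> p \<Longrightarrow> 0 \<le> q \<Longrightarrow> D p < D q \<longleftrightarrow> p < q"
  using dist_order_aut_le_iff[of D q p] by (simp add: not_le[symmetric])

lemma dist_order_aut_eq_iff:
  "dist_order_aut D \<Longrightarrow> 0 \<le> p \<Longrightarrow> 0 \<le> q \<Longrightarrow> D p = D q \<longleftrightarrow> p = q"
  using dist_order_aut_le_iff[of D p q] dist_order_aut_le_iff[of D q p] by auto

lemma dist_order_aut_surj:
  assumes "dist_order_aut D" "0 \<le> t"
  obtains s where "0 \<le> s" "D s = t"
  using dist_order_autD(1)[OF assms(1)] assms(2) unfolding bij_betw_def by force

lemma dist_order_aut_zero: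
  assumes "dist_order_aut D"
  shows "D 0 = 0"
proof -
  obtain s where "0 \<le> s" "D s = 0" using dist_order_aut_surj[OF assms, of 0] by auto
  then show ?thesis
    using dist_order_aut_le_iff[OF assms, of 0 s] dist_order_autD(3)[OF assms, of 0] by simp
qed

lemma dist_order_aut_pos_iff:
  "dist_order_aut D \<Longrightarrow> 0 \<le> p \<Longrightarrow> 0 < D p \<longleftrightarrow> 0 < p"
  using dist_order_aut_less_iff[of D 0 p] dist_order_aut_zero[of D] by simp

lemma dist_order_aut_pos: "dist_order_aut D \<Longrightarrow> 0 < p \<Longrightarrow> 0 < D p"
  by (simp add: dist_order_aut_pos_iff)

lemma dist_order_aut_id: "dist_order_aut id"
  unfolding dist_order_aut_def by simp

lemma dist_order_aut_comp:
  assumes "dist_order_aut D" "dist_order_aut E"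
  shows "dist_order_aut (D \<circ> E)"
  unfolding dist_order_aut_def
proof (intro conjI allI impI)
  show "bij_betw (D \<circ> E) {q. 0 \<le> q} {q. 0 \<le> q}"
    using dist_order_autD(1)[OF assms(1)] dist_order_autD(1)[OF assms(2)] by (rule bij_betw_trans[rotated])
  show "p \<le> q \<longleftrightarrow> (D \<circ> E) p \<le> (D \<circ> E) q" if "0 \<le> p" "0 \<le> q" for p q
    using that dist_order_aut_le_iff[OF assms(1), of "E p" "E q"] dist_order_aut_le_iff[OF assms(2), of p q]
      dist_order_autD(3)[OF assms(2)] by simp
  show "(D \<circ> E) q = q" if "q < 0" for q
    using that dist_order_autD(2)[OF assms(1)] dist_order_autD(2)[OF assms(2)] by simp
qed

definition inv_on :: "'a set \<Rightarrow> ('a \<Rightarrow> 'a) \<Rightarrow> 'a \<Rightarrow> 'a" where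
  "inv_on A f x = (if x \<in> A then inv_into A f x else x)"

lemma bij_betw_inv_on: "bij_betw f A A \<Longrightarrow> bij_betw (inv_on A f) A A"
  using bij_betw_inv_into bij_betw_cong[of A "inv_on A f" "inv_into A f"]
  by (fastforce simp: inv_on_def)

lemma inv_on_f_f: "bij_betw f A A \<Longrightarrow> (\<And>x. x \<notin> A \<Longrightarrow> f x = x) \<Longrightarrow> inv_on A f (f x) = x"
  unfolding inv_on_def by (metis bij_betw_apply bij_betw_inv_into_left)

lemma f_inv_on_f: "bij_betw f A A \<Longrightarrow> (\<And>x. x \<notin> A \<Longrightarrow> f x = x) \<Longrightarrow> f (inv_on A f x) = x"
  unfolding inv_on_def by (simp add: bij_betw_inv_into_right)

lemma inv_on_eq_iff:
  "bij_betw f A A \<Longrightarrow> x \<in> A \<Longrightarrow> inv_on A f x = y \<longleftrightarrow> y \<in> A \<and> f y = x"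
  unfolding inv_on_def
  by (metis bij_betw_apply bij_betw_inv_into bij_betw_inv_into_left bij_betw_inv_into_right)

lemma dist_order_aut_inv:
  assumes "dist_order_aut D"
  shows "dist_order_aut (inv_on {q. 0 \<le> q} D)"
proof -
  note D = dist_order_autD[OF assms]
  have "inv_on {q. 0 \<le> q} D p \<le> inv_on {q. 0 \<le> q} D q \<longleftrightarrow> p \<le> q" if "0 \<le> p" "0 \<le> q" for p q
    using that dist_order_aut_le_iff[OF assms, of "inv_on {q. 0 \<le> q} D p" "inv_on {q. 0 \<le> q} D q"]
      bij_betw_apply[OF bij_betw_inv_on[OF D(1)]] f_inv_on_f[OF D(1,2)] by auto
  then show ?thesis
    unfolding dist_order_aut_def using bij_betw_inv_on[OF D(1)] by (auto simp: inv_on_def)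
qed

lemma group_pair_perms:
  fixes P :: "('a \<Rightarrow> 'a) \<times> ('b \<Rightarrow> 'b) \<Rightarrow> bool" and G
  defines "G \<equiv> \<lparr>carrier = {p. P p}, mult = (\<lambda>p q. (fst p \<circ> fst q, snd p \<circ> snd q)), one = (id, id)\<rparr>"
  assumes comp: "\<And>p q. P p \<Longrightarrow> P q \<Longrightarrow> P (fst p \<circ> fst q, snd p \<circ> snd q)"
    and one: "P (id, id)"
    and inv: "\<And>p. P p \<Longrightarrow> P (\<iota> p)"
    and inv_left: "\<And>p. P p \<Longrightarrow> fst (\<iota> p) \<circ> fst p = id \<and> snd (\<iota> p) \<circ> snd p = id"
  shows "group G" and "\<And>p. P p \<Longrightarrow> inv\<^bsub>G\<^esub> p = \<iota> p"
proof -
  show grp: "group G"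
  proof (rule groupI)
    fix p assume "p \<in> carrier G"
    then show "\<exists>q\<in>carrier G. q \<otimes>\<^bsub>G\<^esub> p = \<one>\<^bsub>G\<^esub>"
      using inv inv_left by (intro bexI[of _ "\<iota> p"]) (simp_all add: G_def)
  qed (simp_all add: G_def comp one comp_assoc)
  show "inv\<^bsub>G\<^esub> p = \<iota> p" if "P p" for p
    by (rule group.inv_equality[OF grp]) (use that inv inv_left in \<open>simp_all add: G_def\<close>)
qed


section \<open>Balls of the Urysohn space with centres in its completion\<close>

definition trace_ball :: "'a set \<Rightarrow> ('a \<Rightarrow> 'a \<Rightarrow> rat) \<Rightarrow> 'a \<Rightarrow> rat \<Rightarrow> 'a set" where
  "trace_ball S d c r = {z \<in> S. d z c < r}"

lemma ball_in_eq_trace_ball [simp]: "ball_in S d x y = trace_ball S d x (d x y)"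
  unfolding ball_in_def trace_ball_def by simp

locale urysohn_completion =
  fixes U X :: "'a set" and d :: "'a \<Rightarrow> 'a \<Rightarrow> rat"
  assumes urysohn: "rational_Urysohn_ultrametric U d"
    and completion: "is_completion U X d"
begin

lemma U_subset_X: "U \<subseteq> X"
  using completion by (simp add: is_completion_def)

lemma countable_U: "countable U"
  using urysohn by (simp add: rational_Urysohn_ultrametric_def)

lemma ultrametric_X: "rat_ultrametric X d"
  using completion by (simp add: is_completion_def)

lemma dist_nonneg: "x \<in> X \<Longrightarrow> y \<in> X \<Longrightarrow> 0 \<le> d x y"
  using ultrametric_X unfolding rat_ultrametric_def by blast

lemma dist_eq_0_iff: "x \<in> X \<Longrightarrow> y \<in> X \<Longrightarrow> d x y = 0 \<longleftrightarrow> x = y"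
  using ultrametric_X unfolding rat_ultrametric_def by blast

lemma dist_commute: "x \<in> X \<Longrightarrow> y \<in> X \<Longrightarrow> d x y = d y x"
  using ultrametric_X unfolding rat_ultrametric_def by blast

lemma dist_ultra: "x \<in> X \<Longrightarrow> y \<in> X \<Longrightarrow> z \<in> X \<Longrightarrow> d x z \<le> max (d x y) (d y z)"
  using ultrametric_X unfolding rat_ultrametric_def by blast

lemma dist_self [simp]: "x \<in> X \<Longrightarrow> d x x = 0"
  using dist_eq_0_iff by blast

lemma dist_pos: "x \<in> X \<Longrightarrow> y \<in> X \<Longrightarrow> x \<noteq> y \<Longrightarrow> 0 < d x y"
  using dist_nonneg dist_eq_0_iff by (simp add: order_less_le)

lemma dist_less_trans:
  "x \<in> X \<Longrightarrow> y \<in> X \<Longrightarrow> z \<in> X \<Longrightarrow> d x y < r \<Longrightarrow> d y z < r \<Longrightarrow> d x z < r"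
  using dist_ultra[of x y z] by simp

lemma dist_le_trans:
  "x \<in> X \<Longrightarrow> y \<in> X \<Longrightarrow> z \<in> X \<Longrightarrow> d x y \<le> r \<Longrightarrow> d y z \<le> r \<Longrightarrow> d x z \<le> r"
  using dist_ultra[of x y z] by simp

lemma dense_U:
  assumes "c \<in> X" "0 < r"
  obtains u where "u \<in> U" "d c u < r" "d u c < r"
proof -
  obtain u where "u \<in> U" "d c u < r"
    using completion assms unfolding is_completion_def by blast
  then show ?thesis
    using that dist_commute[of c u] assms(1) U_subset_X by auto
qed

lemma complete_X: "rat_cauchy X d s \<Longrightarrow> \<exists>x. rat_converges X d s x"
  using completion unfolding is_completion_def by blast

lemma extension_property_U: "ultra_extension_property U d"
  using urysohn by (simp add: rational_Urysohn_ultrametric_def)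

lemma exists_point_at_dist:
  assumes "u \<in> U" "0 < r"
  obtains z where "z \<in> U" "d z u = r"
proof -
  have "d u u = 0" using assms(1) U_subset_X by auto
  then have "\<exists>z\<in>U. \<forall>a\<in>{u}. d z a = r"
    using extension_property_U[unfolded ultra_extension_property_def,
        THEN spec[of _ "{u}"], THEN spec[of _ "\<lambda>_. r"]] assms by auto
  then show ?thesis using that by auto
qed

lemma U_nonempty: "U \<noteq> {}"
proof -
  have "\<exists>z\<in>U. \<forall>a\<in>{}. d z a = 1"
    using extension_property_U[unfolded ultra_extension_property_def,
        THEN spec[of _ "{}"], THEN spec[of _ "\<lambda>_. 1"]] by auto
  then show ?thesis by auto
qed

lemma dist_eq_if_close:
  assumes "a \<in> X" "b \<in> X" "a' \<in> X" "b' \<in> X" "d a a' < s" "d b b' < s" "d a' b' = s"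
  shows "d a b = s"
proof -
  have "d a b' \<le> s" using dist_le_trans[of a a' b' s] assms by simp
  then have "d a b \<le> s" using dist_le_trans[of a b' b s] assms dist_commute by simp
  moreover have "\<not> d a b < s"
  proof
    assume "d a b < s"
    then have "d a' b < s" using dist_less_trans[of a' a b s] assms dist_commute by simp
    then have "d a' b' < s" using dist_less_trans[of a' b b' s] assms by simp
    then show False using assms by simp
  qed
  ultimately show ?thesis by simp
qed

lemma trace_ball_subset_iff:
  assumes c: "c \<in> X" "c' \<in> X" and r: "0 < r" "0 < r'"
  shows "trace_ball U d c r \<subseteq> trace_ball U d c' r' \<longleftrightarrow> r \<le> r' \<and> d c c' < r'"
proof
  assume "r \<le> r' \<and> d c c' < r'"
  then show "trace_ball U d c r \<subseteq> trace_ball U d c' r'"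
    unfolding trace_ball_def using c U_subset_X dist_less_trans[of _ c c' r'] by auto
next
  assume sub: "trace_ball U d c r \<subseteq> trace_ball U d c' r'"
  obtain u where u: "u \<in> U" "d c u < min r r'" "d u c < min r r'"
    using dense_U[OF c(1), of "min r r'"] r by auto
  have uX: "u \<in> X" using u U_subset_X by auto
  have "u \<in> trace_ball U d c r" unfolding trace_ball_def using u by simp
  then have uc': "d u c' < r'" using sub unfolding trace_ball_def by auto
  have cc': "d c c' < r'" using dist_less_trans[of c u c' r'] u uc' c uX by simp
  have "r \<le> r'"
  proof (rule ccontr)
    assume "\<not> r \<le> r'"
    \<comment> \<open>then a point at distance exactly \<open>r'\<close> from \<open>u\<close> lies in the smaller ball but not in the larger\<close>
    obtain z where z: "z \<in> U" "d z u = r'" using exists_point_at_dist[OF u(1) r(2)] by auto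
    have zX: "z \<in> X" using z U_subset_X by auto
    have "d z c \<le> r'" using dist_le_trans[of z u c r'] z u zX uX c by simp
    then have "z \<in> trace_ball U d c r" unfolding trace_ball_def using z \<open>\<not> r \<le> r'\<close> by simp
    then have "d z c' < r'" using sub unfolding trace_ball_def by auto
    moreover have "d c' u < r'" using dist_less_trans[of c' c u r'] cc' u c uX dist_commute by simp
    ultimately have "d z u < r'" using dist_less_trans[of z c' u r'] zX uX c by simp
    then show False using z by simp
  qed
  then show "r \<le> r' \<and> d c c' < r'" using cc' by simp
qed

lemma trace_ball_eq_iff:
  assumes c: "c \<in> X" "c' \<in> X" and r: "0 < r" "0 < r'"
  shows "trace_ball U d c r = trace_ball U d c' r' \<longleftrightarrow> r = r' \<and> d c c' < r"
  using trace_ball_subset_iff[OF c r] trace_ball_subset_iff[OF c(2,1) r(2,1)] dist_commute[OF c]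
  by auto

lemma trace_ball_eq_ball_in:
  assumes c: "c \<in> X" and r: "0 < r"
  obtains x y where "x \<in> U" "y \<in> U" "x \<noteq> y" "d x y = r" "trace_ball U d c r = ball_in U d x y"
proof -
  obtain x where x: "x \<in> U" "d c x < r" using dense_U[OF c r] by blast
  obtain y where y: "y \<in> U" "d y x = r" using exists_point_at_dist[OF x(1) r] by auto
  have xX: "x \<in> X" "y \<in> X" using x(1) y(1) U_subset_X by auto
  have xy: "d x y = r" using y dist_commute[OF xX] by simp
  then have "x \<noteq> y" using r xX by auto
  moreover have "trace_ball U d c r = trace_ball U d x r"
    using trace_ball_eq_iff[OF c xX(1) r r] x by simp
  ultimately show ?thesis using that x(1) y(1) xy by simp
qed

lemma trace_ball_in_balls: "c \<in> X \<Longrightarrow> 0 < r \<Longrightarrow> trace_ball U d c r \<in> balls U d"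
  by (rule trace_ball_eq_ball_in) (auto simp: balls_def simp del: ball_in_eq_trace_ball)

lemma ballsE:
  assumes "B \<in> balls U d"
  obtains c r where "c \<in> X" "0 < r" "B = trace_ball U d c r"
proof -
  obtain x y where "x \<in> U" "y \<in> U" "x \<noteq> y" "B = trace_ball U d x (d x y)"
    using assms unfolding balls_def by auto
  moreover have "x \<in> X" "y \<in> X" using calculation U_subset_X by auto
  ultimately show ?thesis using that dist_pos by blast
qed

lemma ball_level_trace_ball:
  assumes c: "c \<in> X" and r: "0 < r"
  shows "ball_level U d (trace_ball U d c r) = r"
  unfolding ball_level_def
proof (rule the_equality)
  show "\<exists>x\<in>U. \<exists>y\<in>U. x \<noteq> y \<and> trace_ball U d c r = ball_in U d x y \<and> r = d x y"
    by (rule trace_ball_eq_ball_in[OF c r]) (simp del: ball_in_eq_trace_ball, blast)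
next
  fix q assume "\<exists>x\<in>U. \<exists>y\<in>U. x \<noteq> y \<and> trace_ball U d c r = ball_in U d x y \<and> q = d x y"
  then obtain x y where xy: "x \<in> U" "y \<in> U" "x \<noteq> y" "trace_ball U d c r = trace_ball U d x q"
    "q = d x y"
    by auto
  have "x \<in> X" "0 < q" using xy dist_pos U_subset_X by auto
  then show "q = r" using trace_ball_eq_iff[OF c \<open>x \<in> X\<close> r \<open>0 < q\<close>] xy(4) by simp
qed

lemma ball_level_pos: "B \<in> balls U d \<Longrightarrow> 0 < ball_level U d B"
  by (erule ballsE) (simp add: ball_level_trace_ball)

lemma ball_adj_trace_ball_iff:
  assumes c: "c \<in> X" "c' \<in> X" and r: "0 < r" "0 < r'"
  shows "ball_adj U d (trace_ball U d c r) (trace_ball U d c' r') \<longleftrightarrow> r = r' \<and> d c c' = r"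
proof
  assume "ball_adj U d (trace_ball U d c r) (trace_ball U d c' r')"
  then obtain x y where xy: "x \<in> U" "y \<in> U" "x \<noteq> y" "trace_ball U d c r = trace_ball U d x (d x y)"
     "trace_ball U d c' r' = trace_ball U d y (d x y)"
    unfolding ball_adj_def by (auto simp: dist_commute U_subset_X[THEN subsetD])
  have xX: "x \<in> X" "y \<in> X" using xy U_subset_X by auto
  have p: "0 < d x y" using dist_pos xy xX by auto
  have e1: "r = d x y" "d c x < r" using trace_ball_eq_iff[OF c(1) xX(1) r(1) p] xy(4) by auto
  have e2: "r' = d x y" "d c' y < r'" using trace_ball_eq_iff[OF c(2) xX(2) r(2) p] xy(5) by auto
  have "d c' y < r" "d x y = r" using e1 e2 by simp_all
  then have "d c c' = r" by (rule dist_eq_if_close[OF c xX e1(2)])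
  then show "r = r' \<and> d c c' = r" using e1 e2 by simp
next
  assume a: "r = r' \<and> d c c' = r"
  obtain x where x: "x \<in> U" "d c x < r" "d x c < r" using dense_U[OF c(1) r(1)] by blast
  obtain y where y: "y \<in> U" "d c' y < r" "d y c' < r" using dense_U[OF c(2) r(1)] by blast
  have xX: "x \<in> X" "y \<in> X" using x y U_subset_X by auto
  have dxy: "d x y = r" by (rule dist_eq_if_close[OF xX c x(3) y(3)]) (use a in simp)
  then have "x \<noteq> y" using r xX by auto
  moreover have "trace_ball U d c r = ball_in U d x y"
    using dxy trace_ball_eq_iff[OF c(1) xX(1) r(1) r(1)] x by simp
  moreover have "trace_ball U d c' r' = ball_in U d y x"
    using dxy dist_commute[OF xX] trace_ball_eq_iff[OF c(2) xX(2) r(2) r(2)] y a by simp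
  moreover have "trace_ball U d c r \<noteq> trace_ball U d c' r'" using trace_ball_eq_iff[OF c r] a by simp
  ultimately show "ball_adj U d (trace_ball U d c r) (trace_ball U d c' r')"
    unfolding ball_adj_def using x(1) y(1) by blast
qed

end


definition aut_inv :: "'a set \<Rightarrow> ('a \<Rightarrow> 'a) \<times> (rat \<Rightarrow> rat) \<Rightarrow> ('a \<Rightarrow> 'a) \<times> (rat \<Rightarrow> rat)" where
  "aut_inv A p = (inv_on A (fst p), inv_on {q. 0 \<le> q} (snd p))"

lemma aut_inv_left:
  assumes "bij_betw (fst p) A A" "\<And>x. x \<notin> A \<Longrightarrow> fst p x = x" "dist_order_aut (snd p)"
  shows "fst (aut_inv A p) \<circ> fst p = id \<and> snd (aut_inv A p) \<circ> snd p = id"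
  using inv_on_f_f[OF assms(1,2)] inv_on_f_f[OF dist_order_autD(1,2)[OF assms(3)]]
  by (auto simp: aut_inv_def)

lemma dc_autD:
  assumes "dc_aut X d p"
  shows "bij_betw (fst p) X X" "\<And>x. x \<notin> X \<Longrightarrow> fst p x = x" "dist_order_aut (snd p)" "snd p 0 = 0"
    "\<And>x y. x \<in> X \<Longrightarrow> y \<in> X \<Longrightarrow> d (fst p x) (fst p y) = snd p (d x y)"
    "\<And>x. x \<in> X \<Longrightarrow> fst p x \<in> X"
  using assms unfolding dc_aut_def bij_betw_def by auto

lemma dc_aut_id: "dc_aut X d (id, id)"
  unfolding dc_aut_def by (simp add: dist_order_aut_id)

lemma dc_aut_comp:
  assumes "dc_aut X d p" "dc_aut X d q"
  shows "dc_aut X d (fst p \<circ> fst q, snd p \<circ> snd q)"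
  using dc_autD[OF assms(1)] dc_autD[OF assms(2)] bij_betw_trans[of "fst q" X X "fst p"]
    dist_order_aut_comp[of "snd p" "snd q"]
  unfolding dc_aut_def by simp

lemma dc_aut_inv:
  assumes "dc_aut X d p"
  shows "dc_aut X d (aut_inv X p)"
proof -
  note P = dc_autD[OF assms] and D = dist_order_autD[OF dc_autD(3)[OF assms]]
  let ?f = "inv_on X (fst p)" and ?D = "inv_on {q. 0 \<le> q} (snd p)"
  have "d (?f x) (?f y) = ?D (d x y)" if "x \<in> X" "y \<in> X" for x y
  proof -
    have "?f x \<in> X" "?f y \<in> X" using that bij_betw_apply[OF bij_betw_inv_on[OF P(1)]] by auto
    then have "d x y = snd p (d (?f x) (?f y))"
      using P(5) f_inv_on_f[OF P(1,2)] by metis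
    then show ?thesis using inv_on_f_f[OF D(1,2)] by simp
  qed
  moreover have "?D 0 = 0" using inv_on_f_f[OF D(1,2), of 0] P(4) by simp
  ultimately show ?thesis
    using bij_betw_inv_on[OF P(1)] dist_order_aut_inv[OF P(3)]
    unfolding dc_aut_def aut_inv_def by (simp add: inv_on_def)
qed

lemma carrier_AutM [simp]: "carrier (AutM X d) = {p. dc_aut X d p}"
  and mult_AutM [simp]: "p \<otimes>\<^bsub>AutM X d\<^esub> q = (fst p \<circ> fst q, snd p \<circ> snd q)"
  by (simp_all add: AutM_def)

lemma group_AutM: "group (AutM X d)"
  unfolding AutM_def
  by (rule group_pair_perms(1)[of _ "aut_inv X"])
    (simp_all add: dc_aut_comp dc_aut_id dc_aut_inv aut_inv_left[OF dc_autD(1-3)])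

lemma ball_autD:
  assumes "ball_aut S d p"
  shows "bij_betw (fst p) (balls S d) (balls S d)" "\<And>B. B \<notin> balls S d \<Longrightarrow> fst p B = B"
    "\<And>B B'. B \<in> balls S d \<Longrightarrow> B' \<in> balls S d \<Longrightarrow> fst p B \<subseteq> fst p B' \<longleftrightarrow> B \<subseteq> B'"
    "\<And>B B'. B \<in> balls S d \<Longrightarrow> B' \<in> balls S d \<Longrightarrow>
      ball_adj S d (fst p B) (fst p B') \<longleftrightarrow> ball_adj S d B B'"
    "dist_order_aut (snd p)"
    "\<And>B. B \<in> balls S d \<Longrightarrow> ball_level S d (fst p B) = snd p (ball_level S d B)"
    "\<And>B. B \<in> balls S d \<Longrightarrow> fst p B \<in> balls S d"
  using assms unfolding ball_aut_def bij_betw_def by auto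

lemma ball_aut_id: "ball_aut S d (id, id)"
  unfolding ball_aut_def by (simp add: dist_order_aut_id)

lemma ball_aut_comp:
  assumes "ball_aut S d p" "ball_aut S d q"
  shows "ball_aut S d (fst p \<circ> fst q, snd p \<circ> snd q)"
  using ball_autD[OF assms(1)] ball_autD[OF assms(2)] bij_betw_trans[of "fst q" "balls S d" _ "fst p"]
    dist_order_aut_comp[of "snd p" "snd q"]
  unfolding ball_aut_def by simp

lemma ball_aut_inv:
  assumes "ball_aut S d p"
  shows "ball_aut S d (aut_inv (balls S d) p)"
proof -
  note P = ball_autD[OF assms] and D = dist_order_autD[OF ball_autD(5)[OF assms]]
  let ?h = "inv_on (balls S d) (fst p)" and ?D = "inv_on {q. 0 \<le> q} (snd p)"
  have h: "?h B \<in> balls S d" "fst p (?h B) = B" if "B \<in> balls S d" for B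
    using that bij_betw_apply[OF bij_betw_inv_on[OF P(1)]] f_inv_on_f[OF P(1,2)] by auto
  have "ball_level S d (?h B) = ?D (ball_level S d B)" if "B \<in> balls S d" for B
    using P(6)[OF h(1)[OF that]] h(2)[OF that] inv_on_f_f[OF D(1,2)] by metis
  then show ?thesis
    using bij_betw_inv_on[OF P(1)] dist_order_aut_inv[OF P(5)] P(3,4)[OF h(1) h(1)] h(2)
    unfolding ball_aut_def aut_inv_def by (simp add: inv_on_def)
qed

lemma carrier_AutB [simp]: "carrier (AutB S d) = {p. ball_aut S d p}"
  and mult_AutB [simp]: "p \<otimes>\<^bsub>AutB S d\<^esub> q = (fst p \<circ> fst q, snd p \<circ> snd q)"
  by (simp_all add: AutB_def)

lemma group_AutB: "group (AutB S d)"
  unfolding AutB_def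
  by (rule group_pair_perms(1)[of _ "aut_inv (balls S d)"])
    (simp_all add: ball_aut_comp ball_aut_id ball_aut_inv aut_inv_left[OF ball_autD(1,2,5)])

lemma inv_AutB: "p \<in> carrier (AutB S d) \<Longrightarrow> inv\<^bsub>AutB S d\<^esub> p = aut_inv (balls S d) p"
  unfolding AutB_def
  by (rule group_pair_perms(2)[of _ "aut_inv (balls S d)"])
    (simp_all add: ball_aut_comp ball_aut_id ball_aut_inv aut_inv_left[OF ball_autD(1,2,5)])


section \<open>The isomorphism \<open>beta_bar\<close>\<close>

context urysohn_completion
begin

lemma fst_beta_bar_trace_ball:
  assumes p: "dc_aut X d p" and c: "c \<in> X" and r: "0 < r"
  shows "fst (beta_bar U X d p) (trace_ball U d c r) = trace_ball U d (fst p c) (snd p r)"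
proof -
  note P = dc_autD[OF p]
  define Q where "Q B' \<longleftrightarrow> (\<exists>x\<in>U. \<exists>y\<in>U. x \<noteq> y \<and> trace_ball U d c r = ball_in U d x y \<and>
      B' = ball_in X d (fst p x) (fst p y) \<inter> U)" for B'
  have "\<exists>B'. Q B'"
    using trace_ball_in_balls[OF c r] unfolding balls_def Q_def by (auto simp del: ball_in_eq_trace_ball)
  moreover have "B' = trace_ball U d (fst p c) (snd p r)" if QB: "Q B'" for B'
  proof -
    obtain x y where xy: "x \<in> U" "y \<in> U" "x \<noteq> y" "trace_ball U d c r = trace_ball U d x (d x y)"
      "B' = trace_ball X d (fst p x) (d (fst p x) (fst p y)) \<inter> U"
      using QB unfolding Q_def ball_in_eq_trace_ball by blast
    have xX: "x \<in> X" "y \<in> X" using xy U_subset_X by auto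
    have "r = d x y" "d c x < r" using trace_ball_eq_iff[OF c xX(1) r dist_pos[OF xX xy(3)]] xy(4) by auto
    then have "B' = trace_ball U d (fst p x) (snd p r)"
      using xy(5) U_subset_X P(5)[OF xX] unfolding trace_ball_def by auto
    moreover have "d (fst p c) (fst p x) < snd p r"
      using P(5)[OF c xX(1)] dist_order_aut_less_iff[OF P(3)] \<open>d c x < r\<close> dist_nonneg c xX r by simp
    ultimately show ?thesis
      using trace_ball_eq_iff[OF P(6)[OF xX(1)] P(6)[OF c]] dist_order_aut_pos[OF P(3) r]
        dist_commute P(6) c xX by simp
  qed
  ultimately have "Eps Q = trace_ball U d (fst p c) (snd p r)" by (rule someI2_ex)
  then show ?thesis
    using trace_ball_in_balls[OF c r] unfolding beta_bar_def Q_def by simp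
qed

lemma fst_beta_bar_outside: "B \<notin> balls U d \<Longrightarrow> fst (beta_bar U X d p) B = B"
  unfolding beta_bar_def by simp

lemma snd_beta_bar [simp]: "snd (beta_bar U X d p) = snd p"
  unfolding beta_bar_def by simp

lemma fst_beta_bar_in_balls:
  assumes p: "dc_aut X d p" and B: "B \<in> balls U d"
  shows "fst (beta_bar U X d p) B \<in> balls U d"
proof -
  obtain c r where "c \<in> X" "0 < r" "B = trace_ball U d c r" using ballsE[OF B] .
  then show ?thesis
    using fst_beta_bar_trace_ball[OF p] trace_ball_in_balls dc_autD(6)[OF p]
      dist_order_aut_pos[OF dc_autD(3)[OF p]] by simp
qed

lemma fst_beta_bar_comp:
  assumes p: "dc_aut X d p" and q: "dc_aut X d q" and B: "B \<in> balls U d"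
  shows "fst (beta_bar U X d p) (fst (beta_bar U X d q) B) =
    fst (beta_bar U X d (fst p \<circ> fst q, snd p \<circ> snd q)) B"
proof -
  obtain c r where c: "c \<in> X" "0 < r" "B = trace_ball U d c r" using ballsE[OF B] .
  then show ?thesis
    using fst_beta_bar_trace_ball[OF dc_aut_comp[OF p q]] fst_beta_bar_trace_ball[OF q]
      fst_beta_bar_trace_ball[OF p dc_autD(6)[OF q] dist_order_aut_pos[OF dc_autD(3)[OF q]]] by simp
qed

lemma beta_bar_mult:
  assumes "dc_aut X d p" "dc_aut X d q"
  shows "beta_bar U X d (fst p \<circ> fst q, snd p \<circ> snd q) =
    (fst (beta_bar U X d p) \<circ> fst (beta_bar U X d q), snd p \<circ> snd q)"
proof -
  have "fst (beta_bar U X d (fst p \<circ> fst q, snd p \<circ> snd q)) B =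
      fst (beta_bar U X d p) (fst (beta_bar U X d q) B)" for B
    by (cases "B \<in> balls U d") (simp_all add: fst_beta_bar_comp[OF assms] fst_beta_bar_outside)
  then show ?thesis by (simp add: prod_eq_iff fun_eq_iff del: fst_beta_bar_comp)
qed

lemma bij_betw_fst_beta_bar:
  assumes p: "dc_aut X d p"
  shows "bij_betw (fst (beta_bar U X d p)) (balls U d) (balls U d)"
proof -
  note P = dc_autD[OF p] and P' = dc_autD[OF dc_aut_inv[OF p]]
  note D = dist_order_autD[OF P(3)]
  let ?g = "fst (beta_bar U X d p)" and ?h = "fst (beta_bar U X d (aut_inv X p))"
  have "?h (?g B) = B \<and> ?g (?h B) = B" if B: "B \<in> balls U d" for B
  proof -
    obtain c r where c: "c \<in> X" "0 < r" "B = trace_ball U d c r" using ballsE[OF B] .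
    have "?h (?g B) = B"
      using fst_beta_bar_trace_ball[OF dc_aut_inv[OF p] P(6)[OF c(1)] dist_order_aut_pos[OF P(3) c(2)]]
        fst_beta_bar_trace_ball[OF p c(1,2)] inv_on_f_f[OF P(1,2)] inv_on_f_f[OF D(1,2)] c(3)
      by (simp add: aut_inv_def)
    moreover have "?g (?h B) = B"
      using fst_beta_bar_trace_ball[OF p P'(6)[OF c(1)] dist_order_aut_pos[OF P'(3) c(2)]]
        fst_beta_bar_trace_ball[OF dc_aut_inv[OF p] c(1,2)] f_inv_on_f[OF P(1,2)] f_inv_on_f[OF D(1,2)] c(3)
      by (simp add: aut_inv_def)
    ultimately show ?thesis ..
  qed
  then show ?thesis
    by (intro bij_betw_byWitness[where f'="?h"]) (auto intro: fst_beta_bar_in_balls p dc_aut_inv)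
qed

lemma ball_aut_beta_bar:
  assumes p: "dc_aut X d p"
  shows "ball_aut U d (beta_bar U X d p)"
  unfolding ball_aut_def snd_beta_bar
proof (intro conjI allI impI ballI bij_betw_fst_beta_bar[OF p] dc_autD(3)[OF p] fst_beta_bar_outside)
  note P = dc_autD[OF p]
  let ?g = "fst (beta_bar U X d p)"
  fix B B' assume "B \<in> balls U d" "B' \<in> balls U d"
  then obtain c r c' r' where c: "c \<in> X" "0 < r" "B = trace_ball U d c r"
    and c': "c' \<in> X" "0 < r'" "B' = trace_ball U d c' r'" by (metis ballsE)
  have gB: "?g (trace_ball U d c r) = trace_ball U d (fst p c) (snd p r)"
    "?g (trace_ball U d c' r') = trace_ball U d (fst p c') (snd p r')"
    using fst_beta_bar_trace_ball[OF p] c c' by auto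
  have pos: "0 < snd p r" "0 < snd p r'" using dist_order_aut_pos[OF P(3)] c c' by auto
  have dist: "d (fst p c) (fst p c') = snd p (d c c')" "0 \<le> d c c'" using P(5) dist_nonneg c c' by auto
  show "B \<subseteq> B' \<longleftrightarrow> ?g B \<subseteq> ?g B'"
    unfolding c(3) c'(3) gB trace_ball_subset_iff[OF c(1) c'(1) c(2) c'(2)]
      trace_ball_subset_iff[OF P(6)[OF c(1)] P(6)[OF c'(1)] pos] dist(1)
    using dist_order_aut_le_iff[OF P(3)] dist_order_aut_less_iff[OF P(3)] dist(2) c c' by simp
  show "ball_adj U d B B' \<longleftrightarrow> ball_adj U d (?g B) (?g B')"
    unfolding c(3) c'(3) gB ball_adj_trace_ball_iff[OF c(1) c'(1) c(2) c'(2)]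
      ball_adj_trace_ball_iff[OF P(6)[OF c(1)] P(6)[OF c'(1)] pos] dist(1)
    using dist_order_aut_eq_iff[OF P(3)] dist(2) c c' by auto
next
  fix B assume "B \<in> balls U d"
  then obtain c r where c: "c \<in> X" "0 < r" "B = trace_ball U d c r" by (rule ballsE)
  then show "ball_level U d (fst (beta_bar U X d p) B) = snd p (ball_level U d B)"
    using fst_beta_bar_trace_ball[OF p c(1,2)] ball_level_trace_ball dc_autD(6)[OF p]
      dist_order_aut_pos[OF dc_autD(3)[OF p]] by simp
qed

lemma trace_ball_centre_unique:
  assumes "z \<in> X" "z' \<in> X" "\<And>t. 0 < t \<Longrightarrow> trace_ball U d z t = trace_ball U d z' t"
  shows "z = z'"
proof (rule ccontr)
  assume "z \<noteq> z'"
  then have "0 < d z z'" using dist_pos assms by simp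
  then show False using assms(3)[of "d z z'"] trace_ball_eq_iff[OF assms(1,2)] by simp
qed

lemma beta_bar_inj:
  assumes p: "dc_aut X d p" and q: "dc_aut X d q" and eq: "beta_bar U X d p = beta_bar U X d q"
  shows "p = q"
proof -
  note P = dc_autD[OF p] and Q = dc_autD[OF q]
  have snd_eq: "snd p = snd q" using arg_cong[OF eq, of snd] by simp
  have "fst p x = fst q x" if x: "x \<in> X" for x
  proof (rule trace_ball_centre_unique[OF P(6)[OF x] Q(6)[OF x]])
    fix t :: rat assume "0 < t"
    then obtain s where s: "0 < s" "snd p s = t"
      by (metis dist_order_aut_surj[OF P(3)] dist_order_aut_pos_iff[OF P(3)] less_imp_le)
    show "trace_ball U d (fst p x) t = trace_ball U d (fst q x) t"
      using fst_beta_bar_trace_ball[OF p x s(1)] fst_beta_bar_trace_ball[OF q x s(1)] eq snd_eq s(2)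
      by simp
  qed
  then show ?thesis using snd_eq P(2) Q(2) by (metis prod_eqI ext)
qed

lemma ball_aut_trace_ball_image:
  assumes q: "ball_aut U d q" and c: "c \<in> X" and r: "0 < r"
  shows "\<exists>c'\<in>X. fst q (trace_ball U d c r) = trace_ball U d c' (snd q r)"
proof -
  note Q = ball_autD[OF q]
  have B: "trace_ball U d c r \<in> balls U d" using trace_ball_in_balls[OF c r] .
  obtain c' r' where c': "c' \<in> X" "0 < r'" "fst q (trace_ball U d c r) = trace_ball U d c' r'"
    using ballsE[OF Q(7)[OF B]] .
  have "snd q r = r'" using Q(6)[OF B] c' ball_level_trace_ball c r by simp
  then show ?thesis using c' by auto
qed

lemma ball_aut_image_centres_close:
  assumes q: "ball_aut U d q" and x: "x \<in> X" and c: "c \<in> X" "c' \<in> X" and r: "0 < r" "r \<le> r'"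
    and img: "fst q (trace_ball U d x r) = trace_ball U d c (snd q r)"
      "fst q (trace_ball U d x r') = trace_ball U d c' (snd q r')"
  shows "d c c' < snd q r'"
proof -
  note Q = ball_autD[OF q]
  have r': "0 < r'" using r by simp
  have "trace_ball U d x r \<subseteq> trace_ball U d x r'" using trace_ball_subset_iff[OF x x r(1) r'] r x by simp
  then have "trace_ball U d c (snd q r) \<subseteq> trace_ball U d c' (snd q r')"
    using Q(3)[OF trace_ball_in_balls[OF x r(1)] trace_ball_in_balls[OF x r']] img by simp
  then show ?thesis
    using trace_ball_subset_iff[OF c dist_order_aut_pos[OF Q(5) r(1)] dist_order_aut_pos[OF Q(5) r']] by simp
qed

lemma rat_cauchyI:
  assumes "\<And>n. s n \<in> X" and "\<And>m n. m \<le> n \<Longrightarrow> d (s n) (s m) < inverse (of_nat (Suc m))"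
  shows "rat_cauchy X d s"
  unfolding rat_cauchy_def
proof (intro conjI allI impI assms(1))
  fix e :: rat assume "0 < e"
  then obtain N :: nat where N: "0 < N" "inverse (of_nat N) < e" using ex_inverse_of_nat_less by blast
  have "d (s m) (s n) < e" if "N \<le> m" "m \<le> n" for m n
  proof -
    have "inverse (of_nat (Suc m)) \<le> (inverse (of_nat N) :: rat)" using that N(1) by simp
    then show ?thesis using assms(2)[OF that(2)] N(2) dist_commute assms(1) by simp
  qed
  then show "\<exists>N. \<forall>m\<ge>N. \<forall>n\<ge>N. d (s m) (s n) < e"
    using dist_commute assms(1) by (metis nle_le)
qed

lemma nested_centres_converge:
  assumes D: "dist_order_aut D" and c: "\<And>r. 0 < r \<Longrightarrow> c r \<in> X"
    and close: "\<And>s t. 0 < s \<Longrightarrow> s \<le> t \<Longrightarrow> d (c s) (c t) < D t"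
  shows "\<exists>z\<in>X. \<forall>r>0. d (c r) z < D r"
proof -
  note D' = dist_order_autD[OF D]
  define \<rho> where "\<rho> n = inv_on {q. 0 \<le> q} D (inverse (of_nat (Suc n)))" for n
  have D_\<rho>: "D (\<rho> n) = inverse (of_nat (Suc n))" for n
    unfolding \<rho>_def by (rule f_inv_on_f[OF D'(1,2)])
  have \<rho>_pos: "0 < \<rho> n" for n
    using dist_order_aut_pos[OF dist_order_aut_inv[OF D]] unfolding \<rho>_def by simp
  have D_less: "D s < D t \<longleftrightarrow> s < t" if "0 < s" "0 < t" for s t
    using dist_order_aut_less_iff[OF D] that by simp
  have "rat_cauchy X d (c \<circ> \<rho>)"
  proof (rule rat_cauchyI)
    show "(c \<circ> \<rho>) n \<in> X" for n using c \<rho>_pos by simp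
    show "d ((c \<circ> \<rho>) n) ((c \<circ> \<rho>) m) < inverse (of_nat (Suc m))" if "m \<le> n" for m n
      using close[OF \<rho>_pos, of n "\<rho> m"] D_less[OF \<rho>_pos \<rho>_pos, of m n] D_\<rho> that
      by (simp add: less_imp_le)
  qed
  then obtain z where z: "rat_converges X d (c \<circ> \<rho>) z" using complete_X by blast
  then have zX: "z \<in> X" unfolding rat_converges_def by simp
  have "d (c r) z < D r" if r: "0 < r" for r
  proof -
    have Dr: "0 < D r" using dist_order_aut_pos[OF D r] .
    obtain N1 where N1: "\<forall>n\<ge>N1. d (c (\<rho> n)) z < D r" using z Dr unfolding rat_converges_def by auto
    obtain N2 :: nat where N2: "0 < N2" "inverse (of_nat N2) < D r"
      using ex_inverse_of_nat_less[OF Dr] by blast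
    define n where "n = max N1 N2"
    have "inverse (of_nat (Suc n)) \<le> (inverse (of_nat N2) :: rat)" using N2(1) by (simp add: n_def)
    then have "\<rho> n \<le> r" using D_less[OF r \<rho>_pos, of n] D_\<rho> N2(2) by simp
    then have "d (c (\<rho> n)) (c r) < D r" using close[OF \<rho>_pos] by simp
    moreover have "d (c (\<rho> n)) z < D r" using N1 by (simp add: n_def)
    ultimately show ?thesis
      using dist_less_trans[of "c r" "c (\<rho> n)" z] dist_commute c \<rho>_pos r zX by metis
  qed
  then show ?thesis using zX by blast
qed

lemma ball_aut_point_exists:
  assumes q: "ball_aut U d q" and x: "x \<in> X"
  shows "\<exists>z\<in>X. \<forall>r>0. fst q (trace_ball U d x r) = trace_ball U d z (snd q r)"
proof -
  note D = ball_autD(5)[OF q]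
  have "\<forall>r. \<exists>c. 0 < r \<longrightarrow> c \<in> X \<and> fst q (trace_ball U d x r) = trace_ball U d c (snd q r)"
    using ball_aut_trace_ball_image[OF q x] by blast
  then obtain c where c: "\<And>r. 0 < r \<Longrightarrow> c r \<in> X"
    "\<And>r. 0 < r \<Longrightarrow> fst q (trace_ball U d x r) = trace_ball U d (c r) (snd q r)"
    by (metis choice)
  have "d (c s) (c t) < snd q t" if "0 < s" "s \<le> t" for s t
    using ball_aut_image_centres_close[OF q x c(1) c(1) that] c(2) that by simp
  then have "\<exists>z\<in>X. \<forall>r>0. d (c r) z < snd q r"
    using c(1) by (intro nested_centres_converge[OF D]) auto
  then obtain z where z: "z \<in> X" "\<And>r. 0 < r \<Longrightarrow> d (c r) z < snd q r" by blast
  have "fst q (trace_ball U d x r) = trace_ball U d z (snd q r)" if r: "0 < r" for r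
    using c[OF r] z trace_ball_eq_iff[OF c(1)[OF r] z(1)] dist_order_aut_pos[OF D r] r by simp
  then show ?thesis using z(1) by blast
qed

definition ball_aut_point :: "('a set \<Rightarrow> 'a set) \<times> (rat \<Rightarrow> rat) \<Rightarrow> 'a \<Rightarrow> 'a" where
  "ball_aut_point q x = (if x \<in> X
     then SOME z. z \<in> X \<and> (\<forall>r>0. fst q (trace_ball U d x r) = trace_ball U d z (snd q r)) else x)"

lemma ball_aut_point:
  assumes "ball_aut U d q" "x \<in> X"
  shows "ball_aut_point q x \<in> X"
    and "\<And>r. 0 < r \<Longrightarrow> fst q (trace_ball U d x r) = trace_ball U d (ball_aut_point q x) (snd q r)"
  using someI_ex[OF ball_aut_point_exists[OF assms, unfolded Bex_def]] assms(2)
  by (auto simp: ball_aut_point_def)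

lemma ball_aut_point_eqI:
  assumes q: "ball_aut U d q" and x: "x \<in> X" and z: "z \<in> X"
    and img: "\<And>r. 0 < r \<Longrightarrow> fst q (trace_ball U d x r) = trace_ball U d z (snd q r)"
  shows "ball_aut_point q x = z"
proof (rule trace_ball_centre_unique[OF ball_aut_point(1)[OF q x] z])
  note D = ball_autD(5)[OF q]
  fix t :: rat assume "0 < t"
  then obtain s where "0 < s" "snd q s = t"
    by (metis dist_order_aut_surj[OF D] dist_order_aut_pos_iff[OF D] less_imp_le)
  then show "trace_ball U d (ball_aut_point q x) t = trace_ball U d z t"
    using ball_aut_point(2)[OF q x] img by metis
qed

lemma dist_ball_aut_point:
  assumes q: "ball_aut U d q" and x: "x \<in> X" and y: "y \<in> X"
  shows "d (ball_aut_point q x) (ball_aut_point q y) = snd q (d x y)"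
proof -
  note Q = ball_autD[OF q]
  let ?x = "ball_aut_point q x" and ?y = "ball_aut_point q y"
  have xy: "?x \<in> X" "?y \<in> X" using ball_aut_point(1) q x y by auto
  have less_iff: "d ?x ?y < t \<longleftrightarrow> snd q (d x y) < t" if t: "0 < t" for t
  proof -
    obtain s where s: "0 < s" "snd q s = t"
      by (metis t dist_order_aut_surj[OF Q(5)] dist_order_aut_pos_iff[OF Q(5)] less_imp_le)
    have "d ?x ?y < t \<longleftrightarrow> trace_ball U d ?x t = trace_ball U d ?y t"
      using trace_ball_eq_iff[OF xy t t] by simp
    also have "\<dots> \<longleftrightarrow> fst q (trace_ball U d x s) = fst q (trace_ball U d y s)"
      using ball_aut_point(2)[OF q x s(1)] ball_aut_point(2)[OF q y s(1)] s(2) by simp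
    also have "\<dots> \<longleftrightarrow> trace_ball U d x s = trace_ball U d y s"
      using bij_betw_imp_inj_on[OF Q(1)] trace_ball_in_balls[OF x s(1)] trace_ball_in_balls[OF y s(1)]
      by (rule inj_on_eq_iff)
    also have "\<dots> \<longleftrightarrow> d x y < s"
      using trace_ball_eq_iff[OF x y s(1) s(1)] by simp
    also have "\<dots> \<longleftrightarrow> snd q (d x y) < t"
      using dist_order_aut_less_iff[OF Q(5) dist_nonneg[OF x y] less_imp_le[OF s(1)]] s(2) by simp
    finally show ?thesis .
  qed
  show ?thesis
  proof (rule ccontr)
    assume "d ?x ?y \<noteq> snd q (d x y)"
    moreover have "0 \<le> d ?x ?y" "0 \<le> snd q (d x y)"
      using dist_nonneg xy x y dist_order_autD(3)[OF Q(5)] by auto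
    ultimately show False
      using less_iff[of "d ?x ?y"] less_iff[of "snd q (d x y)"] by (cases "d ?x ?y < snd q (d x y)") auto
  qed
qed

definition induced_dc_aut :: "('a set \<Rightarrow> 'a set) \<times> (rat \<Rightarrow> rat) \<Rightarrow> ('a \<Rightarrow> 'a) \<times> (rat \<Rightarrow> rat)" where
  "induced_dc_aut q = (ball_aut_point q, snd q)"

lemma dc_aut_induced_dc_aut:
  assumes q: "ball_aut U d q"
  shows "dc_aut X d (induced_dc_aut q)"
proof -
  note Q = ball_autD[OF q] and D = dist_order_autD[OF ball_autD(5)[OF q]]
  have "inj_on (ball_aut_point q) X"
  proof (rule inj_onI)
    fix x y assume xy: "x \<in> X" "y \<in> X" "ball_aut_point q x = ball_aut_point q y"
    then have "snd q (d x y) = snd q 0"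
      using dist_ball_aut_point[OF q xy(1,2)] ball_aut_point(1)[OF q] dist_order_aut_zero[OF Q(5)] by simp
    then show "x = y" using dist_order_aut_eq_iff[OF Q(5)] dist_nonneg dist_eq_0_iff xy by simp
  qed
  moreover have "z \<in> ball_aut_point q ` X" if z: "z \<in> X" for z
  proof -
    \<comment> \<open>the preimage of \<open>z\<close> is the point induced by the inverse ball automorphism\<close>
    note q' = ball_aut_inv[OF q]
    let ?w = "ball_aut_point (aut_inv (balls U d) q) z"
    have "ball_aut_point q ?w = z"
    proof (rule ball_aut_point_eqI[OF q ball_aut_point(1)[OF q' z] z])
      fix r :: rat assume r: "0 < r"
      have Dr: "0 < snd q r" using dist_order_aut_pos[OF Q(5) r] .
      have "inv_on (balls U d) (fst q) (trace_ball U d z (snd q r)) = trace_ball U d ?w r"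
        using ball_aut_point(2)[OF q' z Dr] inv_on_f_f[OF D(1,2)] by (simp add: aut_inv_def)
      then show "fst q (trace_ball U d ?w r) = trace_ball U d z (snd q r)"
        by (metis f_inv_on_f[OF Q(1,2)])
    qed
    then show ?thesis using ball_aut_point(1)[OF q' z] by force
  qed
  ultimately have "bij_betw (ball_aut_point q) X X"
    unfolding bij_betw_def using ball_aut_point(1)[OF q] by blast
  then show ?thesis
    unfolding dc_aut_def induced_dc_aut_def
    using Q(5) dist_order_aut_zero[OF Q(5)] dist_ball_aut_point[OF q] by (simp add: ball_aut_point_def)
qed

lemma beta_bar_induced_dc_aut:
  assumes q: "ball_aut U d q"
  shows "beta_bar U X d (induced_dc_aut q) = q"
proof -
  have "fst (beta_bar U X d (induced_dc_aut q)) B = fst q B" for B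
  proof (cases "B \<in> balls U d")
    case True
    then obtain c r where "c \<in> X" "0 < r" "B = trace_ball U d c r" by (rule ballsE)
    then show ?thesis
      using fst_beta_bar_trace_ball[OF dc_aut_induced_dc_aut[OF q]] ball_aut_point(2)[OF q]
      by (simp add: induced_dc_aut_def)
  qed (simp add: fst_beta_bar_outside ball_autD(2)[OF q])
  then show ?thesis by (intro prod_eqI ext) (simp_all add: induced_dc_aut_def)
qed

lemma beta_bar_bij: "bij_betw (beta_bar U X d) (carrier (AutM X d)) (carrier (AutB U d))"
proof (rule bij_betw_imageI)
  show "inj_on (beta_bar U X d) (carrier (AutM X d))"
    by (rule inj_onI) (use beta_bar_inj in simp)
  show "beta_bar U X d ` carrier (AutM X d) = carrier (AutB U d)"
  proof
    show "beta_bar U X d ` carrier (AutM X d) \<subseteq> carrier (AutB U d)"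
      using ball_aut_beta_bar by auto
    show "carrier (AutB U d) \<subseteq> beta_bar U X d ` carrier (AutM X d)"
      using dc_aut_induced_dc_aut beta_bar_induced_dc_aut by (auto intro!: image_eqI[OF sym])
  qed
qed

lemma beta_bar_iso: "beta_bar U X d \<in> iso (AutM X d) (AutB U d)"
  unfolding iso_def hom_def using beta_bar_bij ball_aut_beta_bar beta_bar_mult by auto

end


lemma continuous_map_topology_generated_by:
  assumes "\<And>x. x \<in> topspace T \<Longrightarrow> f x \<in> \<Union>S"
    and "\<And>s. s \<in> S \<Longrightarrow> openin T {x \<in> topspace T. f x \<in> s}"
  shows "continuous_map T (topology_generated_by S) f"
  unfolding continuous_map_def openin_topology_generated_by_iff
proof (intro conjI allI impI)
  show "f \<in> topspace T \<rightarrow> topspace (topology_generated_by S)" using assms(1) by auto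
  let ?O = "\<lambda>W. openin T {x \<in> topspace T. f x \<in> W}"
  have "istopology ?O"
    unfolding istopology_def
  proof (intro conjI allI impI)
    fix V W assume "?O V" "?O W"
    moreover have "{x \<in> topspace T. f x \<in> V \<inter> W} =
        {x \<in> topspace T. f x \<in> V} \<inter> {x \<in> topspace T. f x \<in> W}" by auto
    ultimately show "?O (V \<inter> W)" by (simp add: openin_Int)
  next
    fix \<K> assume "\<forall>W\<in>\<K>. ?O W"
    moreover have "{x \<in> topspace T. f x \<in> \<Union>\<K>} = (\<Union>W\<in>\<K>. {x \<in> topspace T. f x \<in> W})" by auto
    ultimately show "?O (\<Union>\<K>)" by (metis (no_types, lifting) imageE openin_Union)
  qed
  then show "?O W" if "generate_topology_on S W" for W
    using generate_topology_on_coarsest[of ?O S W] assms(2) that by blast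
qed

lemma second_countable_topology_generated_by:
  assumes "countable S"
  shows "second_countable (topology_generated_by S)"
proof -
  let ?B = "{V. (finite' intersection_of (\<lambda>s. s \<in> S)) V}"
  have "?B \<subseteq> Inter ` {F. finite F \<and> F \<subseteq> S}" by (auto simp: intersection_of_def)
  then have "countable ?B"
    by (rule countable_subset) (simp add: assms countable_Collect_finite_subset)
  moreover have "openin (topology_generated_by S) = generate_topology_on S"
    by (simp add: fun_eq_iff openin_topology_generated_by_iff)
  then have "openin (topology_generated_by S) = arbitrary union_of (\<lambda>V. V \<in> ?B)"
    by (simp add: generate_topology_on_eq)
  ultimately show ?thesis unfolding second_countable by blast
qed

lemma continuous_map_discrete_topology_iff:
  "continuous_map T (discrete_topology Z) f \<longleftrightarrow>
    (\<forall>x\<in>topspace T. f x \<in> Z) \<and> (\<forall>z. openin T {x \<in> topspace T. f x = z})"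
proof safe
  assume f: "continuous_map T (discrete_topology Z) f"
  then show "f x \<in> Z" if "x \<in> topspace T" for x using that by (auto simp: continuous_map_def)
  fix z
  have "{x \<in> topspace T. f x = z} = {x \<in> topspace T. f x \<in> {z} \<inter> Z}"
    using f by (auto simp: continuous_map_def)
  then show "openin T {x \<in> topspace T. f x = z}"
    using openin_continuous_map_preimage[OF f, of "{z} \<inter> Z"] by simp
next
  assume "\<forall>x\<in>topspace T. f x \<in> Z" "\<forall>z. openin T {x \<in> topspace T. f x = z}"
  moreover have "{x \<in> topspace T. f x \<in> W} = (\<Union>z\<in>W. {x \<in> topspace T. f x = z})" for W by auto
  ultimately show "continuous_map T (discrete_topology Z) f"
    unfolding continuous_map_def by auto
qed

lemma closedin_discrete_preimage:
  assumes "continuous_map T (discrete_topology Z) f"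
  shows "closedin T {x \<in> topspace T. P (f x)}"
proof -
  have "{x \<in> topspace T. P (f x)} = {x \<in> topspace T. f x \<in> {z \<in> Z. P z}}"
    using assms by (auto simp: continuous_map_def)
  then show ?thesis
    using closedin_continuous_map_preimage[OF assms, of "{z \<in> Z. P z}"] by simp
qed

lemma closedin_discrete_relation:
  assumes "continuous_map T (discrete_topology A) f" "continuous_map T (discrete_topology B) g"
  shows "closedin T {x \<in> topspace T. R (f x) (g x)}"
proof -
  have "continuous_map T (discrete_topology (A \<times> B)) (\<lambda>x. (f x, g x))"
    using continuous_map_pairedI[OF assms] by (simp add: prod_topology_discrete_topology)
  from closedin_discrete_preimage[OF this, of "case_prod R"] show ?thesis by simp
qed

lemma closedin_Collect_conj:
  assumes "closedin T {x \<in> topspace T. P x}" "closedin T {x \<in> topspace T. Q x}"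
  shows "closedin T {x \<in> topspace T. P x \<and> Q x}"
proof -
  have "{x \<in> topspace T. P x \<and> Q x} = {x \<in> topspace T. P x} \<inter> {x \<in> topspace T. Q x}" by auto
  then show ?thesis using closedin_Int[OF assms] by simp
qed

lemma closedin_Collect_Ball:
  assumes "\<And>i. i \<in> I \<Longrightarrow> closedin T {x \<in> topspace T. P i x}"
  shows "closedin T {x \<in> topspace T. \<forall>i\<in>I. P i x}"
proof -
  have "{x \<in> topspace T. \<forall>i\<in>I. P i x} = topspace T \<inter> \<Inter>((\<lambda>i. {x \<in> topspace T. P i x}) ` I)"
    by auto
  moreover have "closedin T (topspace T \<inter> \<Inter>((\<lambda>i. {x \<in> topspace T. P i x}) ` I))"
    using assms by (cases "I = {}") (auto intro!: closedin_Int closedin_Inter)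
  ultimately show ?thesis by simp
qed

lemma topspace_AutM_topology: "topspace (AutM_topology X d) = carrier (AutM X d)"
proof -
  let ?S = "{AutM_nbhd X d A r p | A r p. finite A \<and> A \<subseteq> X \<and> r > 0 \<and> p \<in> carrier (AutM X d)}"
  have "carrier (AutM X d) \<in> ?S"
  proof -
    have "carrier (AutM X d) = AutM_nbhd X d {} 1 (id, id)" by (simp add: AutM_nbhd_def)
    then show ?thesis using dc_aut_id by fastforce
  qed
  moreover have "N \<subseteq> carrier (AutM X d)" if "N \<in> ?S" for N using that by (auto simp: AutM_nbhd_def)
  ultimately have "\<Union>?S = carrier (AutM X d)" by (intro antisym Sup_least Sup_upper)
  then show ?thesis unfolding AutM_topology_def topology_generated_by_topspace .
qed

lemma openin_AutM_nbhd:
  "finite A \<Longrightarrow> A \<subseteq> X \<Longrightarrow> 0 < r \<Longrightarrow> p \<in> carrier (AutM X d) \<Longrightarrow>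
    openin (AutM_topology X d) (AutM_nbhd X d A r p)"
  unfolding AutM_topology_def by (rule topology_generated_by_Basis) blast

lemma AutM_nbhd_mono: "A \<subseteq> A' \<Longrightarrow> r' \<le> r \<Longrightarrow> AutM_nbhd X d A' r' p \<subseteq> AutM_nbhd X d A r p"
  unfolding AutM_nbhd_def by fastforce

lemma topspace_AutB_topology: "topspace (AutB_topology S d) = carrier (AutB S d)"
  unfolding AutB_topology_def topology_generated_by_topspace by blast

lemma openin_AutB_fst:
  "B \<in> balls S d \<Longrightarrow> openin (AutB_topology S d) {p \<in> carrier (AutB S d). fst p B = C}"
  unfolding AutB_topology_def by (rule topology_generated_by_Basis) blast

lemma openin_AutB_snd:
  "0 \<le> q \<Longrightarrow> openin (AutB_topology S d) {p \<in> carrier (AutB S d). snd p q = s}"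
  unfolding AutB_topology_def by (rule topology_generated_by_Basis) blast

lemma continuous_map_AutB_topologyI:
  assumes "\<And>x. x \<in> topspace T \<Longrightarrow> f x \<in> carrier (AutB S d)"
    and "\<And>B C. B \<in> balls S d \<Longrightarrow> openin T {x \<in> topspace T. fst (f x) B = C}"
    and "\<And>q s. 0 \<le> q \<Longrightarrow> openin T {x \<in> topspace T. snd (f x) q = s}"
  shows "continuous_map T (AutB_topology S d) f"
  unfolding AutB_topology_def
proof (rule continuous_map_topology_generated_by)
  show "f x \<in> \<Union>({carrier (AutB S d)} \<union> {{p \<in> carrier (AutB S d). fst p B = C} |B C. B \<in> balls S d} \<union>
      {{p \<in> carrier (AutB S d). snd p q = s} |q s. 0 \<le> q})" if "x \<in> topspace T" for x
    using assms(1)[OF that] by blast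
  have pre: "{x \<in> topspace T. f x \<in> {p \<in> carrier (AutB S d). P p}} = {x \<in> topspace T. P (f x)}" for P
    using assms(1) by auto
  fix W
  assume "W \<in> {carrier (AutB S d)} \<union> {{p \<in> carrier (AutB S d). fst p B = C} |B C. B \<in> balls S d} \<union>
    {{p \<in> carrier (AutB S d). snd p q = s} |q s. 0 \<le> q}"
  then consider "W = carrier (AutB S d)"
    | B C where "B \<in> balls S d" "W = {p \<in> carrier (AutB S d). fst p B = C}"
    | q s where "0 \<le> q" "W = {p \<in> carrier (AutB S d). snd p q = s}"
    by auto
  then show "openin T {x \<in> topspace T. f x \<in> W}"
  proof cases
    case 1
    then have "{x \<in> topspace T. f x \<in> W} = topspace T" using assms(1) by auto
    then show ?thesis by simp
  qed (simp_all only: pre assms(2,3))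
qed


section \<open>\<open>beta_bar\<close> is a homeomorphism\<close>

context urysohn_completion
begin

lemma AutM_nbhd_self:
  "p \<in> carrier (AutM X d) \<Longrightarrow> A \<subseteq> X \<Longrightarrow> 0 < r \<Longrightarrow> p \<in> AutM_nbhd X d A r p"
  unfolding AutM_nbhd_def using dc_autD(6)[of X d p] by auto

lemma AutM_nbhd_subset:
  assumes "p' \<in> AutM_nbhd X d A r p" "A \<subseteq> X" "p \<in> carrier (AutM X d)"
  shows "AutM_nbhd X d A r p' \<subseteq> AutM_nbhd X d A r p"
proof
  fix q assume q: "q \<in> AutM_nbhd X d A r p'"
  have dc: "dc_aut X d p'" "dc_aut X d p" "dc_aut X d q" using assms q by (auto simp: AutM_nbhd_def)
  have "d (fst q x) (fst p x) < r" if "x \<in> A" for x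
  proof -
    have "x \<in> X" "d (fst q x) (fst p' x) < r" "d (fst p' x) (fst p x) < r"
      using that assms q by (auto simp: AutM_nbhd_def)
    then show ?thesis
      using dist_less_trans[of "fst q x" "fst p' x" "fst p x" r] dc_autD(6)[OF dc(1)] dc_autD(6)[OF dc(2)]
        dc_autD(6)[OF dc(3)] by simp
  qed
  then show "q \<in> AutM_nbhd X d A r p" using dc(3) by (simp add: AutM_nbhd_def)
qed

lemma openin_AutM_topology_imp_nbhd:
  assumes "openin (AutM_topology X d) V"
  shows "\<forall>p\<in>V. \<exists>A r. finite A \<and> A \<subseteq> X \<and> 0 < r \<and> AutM_nbhd X d A r p \<subseteq> V"
proof -
  have "generate_topology_on
      {AutM_nbhd X d A r p | A r p. finite A \<and> A \<subseteq> X \<and> r > 0 \<and> p \<in> carrier (AutM X d)} V"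
    using assms by (simp add: AutM_topology_def openin_topology_generated_by_iff)
  then show ?thesis
  proof induction
    case Empty
    then show ?case by simp
  next
    case (Int V W)
    show ?case
    proof
      fix p assume "p \<in> V \<inter> W"
      then obtain A r A' r' where 1: "finite A" "A \<subseteq> X" "0 < r" "AutM_nbhd X d A r p \<subseteq> V"
        and 2: "finite A'" "A' \<subseteq> X" "0 < r'" "AutM_nbhd X d A' r' p \<subseteq> W"
        using Int.IH by (meson IntD1 IntD2)
      have "AutM_nbhd X d (A \<union> A') (min r r') p \<subseteq> V \<inter> W"
        using AutM_nbhd_mono[of A "A \<union> A'" "min r r'" r] AutM_nbhd_mono[of A' "A \<union> A'" "min r r'" r'] 1 2
        by (meson Int_greatest Un_upper1 Un_upper2 min.cobounded1 min.cobounded2 order_trans)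
      then show "\<exists>A r. finite A \<and> A \<subseteq> X \<and> 0 < r \<and> AutM_nbhd X d A r p \<subseteq> V \<inter> W"
        using 1 2 by (intro exI[of _ "A \<union> A'"] exI[of _ "min r r'"]) simp
    qed
  next
    case (UN \<K>)
    show ?case
    proof
      fix p assume "p \<in> \<Union>\<K>"
      then obtain K where K: "K \<in> \<K>" "p \<in> K" by blast
      obtain A r where "finite A" "A \<subseteq> X" "0 < r" "AutM_nbhd X d A r p \<subseteq> K"
        using bspec[OF UN.IH[OF K(1)] K(2)] by blast
      moreover have "K \<subseteq> \<Union>\<K>" using K(1) by blast
      ultimately show "\<exists>A r. finite A \<and> A \<subseteq> X \<and> 0 < r \<and> AutM_nbhd X d A r p \<subseteq> \<Union>\<K>"
        by (meson order_trans)
    qed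
  next
    case (Basis N)
    then obtain A r p0 where N: "N = AutM_nbhd X d A r p0" "finite A" "A \<subseteq> X" "0 < r"
      "p0 \<in> carrier (AutM X d)"
      by blast
    show ?case
    proof
      fix p assume "p \<in> N"
      then have "AutM_nbhd X d A r p \<subseteq> N" using AutM_nbhd_subset N by simp
      then show "\<exists>A r. finite A \<and> A \<subseteq> X \<and> 0 < r \<and> AutM_nbhd X d A r p \<subseteq> N"
        using N(2-4) by blast
    qed
  qed
qed

lemma AutM_snd_locally_constant:
  assumes p0: "p0 \<in> carrier (AutM X d)"
  shows "\<exists>N. openin (AutM_topology X d) N \<and> p0 \<in> N \<and> (\<forall>p\<in>N. snd p t = snd p0 t)"
proof (cases "0 < t")
  case True
  note P0 = dc_autD[OF p0[simplified]]
  obtain c where c: "c \<in> U" using U_nonempty by blast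
  obtain y where y: "y \<in> U" "d y c = t" using exists_point_at_dist[OF c True] by blast
  have cy: "c \<in> X" "y \<in> X" "d c y = t" using c y U_subset_X dist_commute by auto
  let ?s = "snd p0 t"
  let ?N = "AutM_nbhd X d {c, y} ?s p0"
  have s: "0 < ?s" using dist_order_aut_pos[OF P0(3) True] .
  have "snd p t = ?s" if p: "p \<in> ?N" for p
  proof -
    have "dc_aut X d p" using p by (simp add: AutM_nbhd_def)
    note P = dc_autD[OF this]
    have "d (fst p c) (fst p0 c) < ?s" "d (fst p y) (fst p0 y) < ?s"
      using p by (auto simp: AutM_nbhd_def)
    then have "d (fst p c) (fst p y) = ?s"
      using dist_eq_if_close[of "fst p c" "fst p y" "fst p0 c" "fst p0 y" ?s] P0(5,6) P(6) cy by simp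
    then show ?thesis using P(5) cy by simp
  qed
  moreover have "openin (AutM_topology X d) ?N" using openin_AutM_nbhd[of "{c, y}" X ?s p0 d] cy s p0 by simp
  moreover have "p0 \<in> ?N" using AutM_nbhd_self[OF p0] cy s by simp
  ultimately show ?thesis by blast
next
  case False
  have "snd p t = snd p0 t" if "p \<in> carrier (AutM X d)" for p
  proof -
    have "dc_aut X d p" "dc_aut X d p0" using that p0 by auto
    then show ?thesis
      using False dc_autD(4)[of X d p] dc_autD(4)[of X d p0]
        dist_order_autD(2)[OF dc_autD(3), of X d p t] dist_order_autD(2)[OF dc_autD(3), of X d p0 t]
      by (cases "t = 0") simp_all
  qed
  then show ?thesis
    using p0 openin_topspace[of "AutM_topology X d"] unfolding topspace_AutM_topology by blast
qed

lemma openin_AutM_snd: "openin (AutM_topology X d) {p \<in> carrier (AutM X d). snd p t = s}"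
proof (subst openin_subopen, intro ballI)
  fix p0 assume p0: "p0 \<in> {p \<in> carrier (AutM X d). snd p t = s}"
  then obtain N where N: "openin (AutM_topology X d) N" "p0 \<in> N" "\<forall>p\<in>N. snd p t = snd p0 t"
    using AutM_snd_locally_constant[of p0 t] by blast
  have "N \<subseteq> carrier (AutM X d)"
    using openin_subset[OF N(1)] topspace_AutM_topology[of X d] by simp
  then have "N \<subseteq> {p \<in> carrier (AutM X d). snd p t = s}"
    using N(3) p0 by (simp add: subset_iff)
  then show "\<exists>N. openin (AutM_topology X d) N \<and> p0 \<in> N \<and> N \<subseteq> {p \<in> carrier (AutM X d). snd p t = s}"
    using N(1,2) by blast
qed

lemma fst_beta_bar_locally_constant:
  assumes p0: "p0 \<in> carrier (AutM X d)" and B: "B \<in> balls U d"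
  shows "\<exists>N. openin (AutM_topology X d) N \<and> p0 \<in> N \<and>
    (\<forall>p\<in>N. fst (beta_bar U X d p) B = fst (beta_bar U X d p0) B)"
proof -
  obtain c r where c: "c \<in> X" "0 < r" "B = trace_ball U d c r" using ballsE[OF B] .
  note P0 = dc_autD[OF p0[simplified]]
  let ?s = "snd p0 r"
  have s: "0 < ?s" using dist_order_aut_pos[OF P0(3) c(2)] .
  obtain N where N: "openin (AutM_topology X d) N" "p0 \<in> N" "\<forall>p\<in>N. snd p r = ?s"
    using AutM_snd_locally_constant[OF p0] by blast
  let ?N = "N \<inter> AutM_nbhd X d {c} ?s p0"
  have "fst (beta_bar U X d p) B = fst (beta_bar U X d p0) B" if p: "p \<in> ?N" for p
  proof -
    have "dc_aut X d p" using p by (simp add: AutM_nbhd_def)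
    moreover have "d (fst p c) (fst p0 c) < ?s" "snd p r = ?s"
      using p N(3) by (auto simp: AutM_nbhd_def)
    ultimately have "trace_ball U d (fst p c) (snd p r) = trace_ball U d (fst p0 c) ?s"
      using trace_ball_eq_iff[OF dc_autD(6) P0(6)] c s by simp
    then show ?thesis
      using fst_beta_bar_trace_ball[OF \<open>dc_aut X d p\<close> c(1,2)]
        fst_beta_bar_trace_ball[OF p0[simplified] c(1,2)] c(3) by simp
  qed
  moreover have "openin (AutM_topology X d) ?N"
    using N(1) openin_AutM_nbhd[of "{c}" X ?s p0 d] s p0 c by (simp add: openin_Int)
  moreover have "p0 \<in> ?N" using N(2) AutM_nbhd_self[OF p0, of "{c}" ?s] s c by simp
  ultimately show ?thesis by blast
qed

lemma continuous_map_beta_bar: "continuous_map (AutM_topology X d) (AutB_topology U d) (beta_bar U X d)"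
proof (rule continuous_map_AutB_topologyI)
  show "beta_bar U X d p \<in> carrier (AutB U d)" if "p \<in> topspace (AutM_topology X d)" for p
    using that ball_aut_beta_bar by (simp add: topspace_AutM_topology)
next
  fix B C assume B: "B \<in> balls U d"
  show "openin (AutM_topology X d) {p \<in> topspace (AutM_topology X d). fst (beta_bar U X d p) B = C}"
  proof (subst openin_subopen, intro ballI)
    fix p0 assume "p0 \<in> {p \<in> topspace (AutM_topology X d). fst (beta_bar U X d p) B = C}"
    then have p0: "p0 \<in> carrier (AutM X d)" and C: "fst (beta_bar U X d p0) B = C"
      by (auto simp: topspace_AutM_topology)
    obtain N where N: "openin (AutM_topology X d) N" "p0 \<in> N"
      "\<forall>p\<in>N. fst (beta_bar U X d p) B = fst (beta_bar U X d p0) B"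
      using fst_beta_bar_locally_constant[OF p0 B] by blast
    then have "N \<subseteq> {p \<in> topspace (AutM_topology X d). fst (beta_bar U X d p) B = C}"
      using openin_subset[OF N(1)] C by (simp add: subset_iff)
    then show "\<exists>T. openin (AutM_topology X d) T \<and> p0 \<in> T \<and>
        T \<subseteq> {p \<in> topspace (AutM_topology X d). fst (beta_bar U X d p) B = C}"
      using N(1,2) by blast
  qed
next
  fix t s :: rat
  show "openin (AutM_topology X d) {p \<in> topspace (AutM_topology X d). snd (beta_bar U X d p) t = s}"
    using openin_AutM_snd by (simp add: topspace_AutM_topology)
qed

lemma beta_bar_image_nbhdI:
  assumes p0: "dc_aut X d p0" and A: "A \<subseteq> X" and e: "0 < e" "snd p0 e = r"
    and q: "ball_aut U d q" "snd q e = r"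
    and img: "\<And>a. a \<in> A \<Longrightarrow> fst q (trace_ball U d a e) = trace_ball U d (fst p0 a) r"
  shows "q \<in> beta_bar U X d ` AutM_nbhd X d A r p0"
proof -
  note P0 = dc_autD[OF p0]
  let ?p = "induced_dc_aut q"
  have p: "dc_aut X d ?p" "beta_bar U X d ?p = q"
    using dc_aut_induced_dc_aut[OF q(1)] beta_bar_induced_dc_aut[OF q(1)] by auto
  have r: "0 < r" "snd ?p e = r"
    using dist_order_aut_pos[OF P0(3) e(1)] e(2) q(2) by (auto simp: induced_dc_aut_def)
  have "d (fst ?p a) (fst p0 a) < r" if a: "a \<in> A" for a
  proof -
    have aX: "a \<in> X" using a A by auto
    have "trace_ball U d (fst ?p a) r = trace_ball U d (fst p0 a) r"
      using img[OF a] fst_beta_bar_trace_ball[OF p(1) aX e(1)] p(2) r(2) by simp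
    then show ?thesis
      using trace_ball_eq_iff[OF dc_autD(6)[OF p(1) aX] P0(6)[OF aX] r(1) r(1)] by simp
  qed
  then have "?p \<in> AutM_nbhd X d A r p0" using p(1) by (simp add: AutM_nbhd_def)
  then show ?thesis using p(2) by force
qed

text \<open>The image of \<open>AutM_nbhd X d A r p0\<close> contains the basic open set of ball automorphisms
  that agree with \<open>beta_bar U X d p0\<close> at the distance \<open>e\<close> with \<open>snd p0 e = r\<close> and at the balls of
  radius \<open>e\<close> about the points of \<open>A\<close>.\<close>

lemma beta_bar_image_nbhd:
  assumes p0: "p0 \<in> carrier (AutM X d)" and A: "finite A" "A \<subseteq> X" and r: "0 < r"
  shows "\<exists>W. openin (AutB_topology U d) W \<and> beta_bar U X d p0 \<in> W \<and>
    W \<subseteq> beta_bar U X d ` AutM_nbhd X d A r p0"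
proof -
  note P0 = dc_autD[OF p0[simplified]] and D0 = dist_order_autD[OF dc_autD(3)[OF p0[simplified]]]
  define e where "e = inv_on {q. 0 \<le> q} (snd p0) r"
  have e: "0 < e" "snd p0 e = r"
    using dist_order_aut_pos[OF dist_order_aut_inv[OF P0(3)] r] f_inv_on_f[OF D0(1,2)]
    by (simp_all add: e_def)
  define W where "W = \<Inter>(insert {q \<in> carrier (AutB U d). snd q e = r}
    ((\<lambda>a. {q \<in> carrier (AutB U d). fst q (trace_ball U d a e) = trace_ball U d (fst p0 a) r}) ` A))"
  have "openin (AutB_topology U d) W"
    unfolding W_def
  proof (intro openin_Inter ballI)
    fix N assume "N \<in> insert {q \<in> carrier (AutB U d). snd q e = r}
      ((\<lambda>a. {q \<in> carrier (AutB U d). fst q (trace_ball U d a e) = trace_ball U d (fst p0 a) r}) ` A)"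
    then show "openin (AutB_topology U d) N"
      using openin_AutB_snd[of e U d r] openin_AutB_fst[OF trace_ball_in_balls[OF _ e(1)]] A(2) e(1)
      by (auto simp del: carrier_AutB)
  qed (use A(1) in simp_all)
  moreover have "beta_bar U X d p0 \<in> W"
  proof -
    have "fst (beta_bar U X d p0) (trace_ball U d a e) = trace_ball U d (fst p0 a) r" if "a \<in> A" for a
      using fst_beta_bar_trace_ball[OF p0[simplified] _ e(1)] e(2) that A(2) by auto
    then show ?thesis
      unfolding W_def using ball_aut_beta_bar[OF p0[simplified]] e(2) by simp
  qed
  moreover have "W \<subseteq> beta_bar U X d ` AutM_nbhd X d A r p0"
    using beta_bar_image_nbhdI[OF p0[simplified] A(2) e] unfolding W_def by auto
  ultimately show ?thesis by blast
qed

lemma open_map_beta_bar: "open_map (AutM_topology X d) (AutB_topology U d) (beta_bar U X d)"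
  unfolding open_map_def
proof (intro allI impI)
  fix V assume V: "openin (AutM_topology X d) V"
  show "openin (AutB_topology U d) (beta_bar U X d ` V)"
  proof (subst openin_subopen, intro ballI)
    fix q0 assume "q0 \<in> beta_bar U X d ` V"
    then obtain p0 where p0: "p0 \<in> V" "q0 = beta_bar U X d p0" by blast
    have "p0 \<in> carrier (AutM X d)"
      using openin_subset[OF V] p0(1) topspace_AutM_topology[of X d] by auto
    moreover obtain A r where "finite A" "A \<subseteq> X" "0 < r" and nbhd: "AutM_nbhd X d A r p0 \<subseteq> V"
      using bspec[OF openin_AutM_topology_imp_nbhd[OF V] p0(1)] by blast
    ultimately obtain W where W: "openin (AutB_topology U d) W" "beta_bar U X d p0 \<in> W"
      "W \<subseteq> beta_bar U X d ` AutM_nbhd X d A r p0"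
      using beta_bar_image_nbhd[of p0 A r] by blast
    have "W \<subseteq> beta_bar U X d ` V" using W(3) image_mono[OF nbhd] by (rule order_trans)
    then show "\<exists>T. openin (AutB_topology U d) T \<and> q0 \<in> T \<and> T \<subseteq> beta_bar U X d ` V"
      using W(1,2) p0(2) by blast
  qed
qed

lemma homeomorphic_map_beta_bar:
  "homeomorphic_map (AutM_topology X d) (AutB_topology U d) (beta_bar U X d)"
proof (rule bijective_open_imp_homeomorphic_map[OF continuous_map_beta_bar open_map_beta_bar])
  show "beta_bar U X d ` topspace (AutM_topology X d) = topspace (AutB_topology U d)"
    using beta_bar_bij unfolding bij_betw_def topspace_AutM_topology topspace_AutB_topology by (rule conjunct2)
  show "inj_on (beta_bar U X d) (topspace (AutM_topology X d))"
    using beta_bar_bij unfolding bij_betw_def topspace_AutM_topology by (rule conjunct1)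
qed

end


section \<open>\<open>AutB\<close> is a Polish group\<close>

lemma continuous_map_AutB_mult:
  "continuous_map (prod_topology (AutB_topology S d) (AutB_topology S d)) (AutB_topology S d)
     (\<lambda>(a, b). a \<otimes>\<^bsub>AutB S d\<^esub> b)"
proof (rule continuous_map_AutB_topologyI)
  let ?T = "prod_topology (AutB_topology S d) (AutB_topology S d)"
  have T: "topspace ?T = carrier (AutB S d) \<times> carrier (AutB S d)"
    by (simp add: topspace_AutB_topology)
  show "(case x of (a, b) \<Rightarrow> a \<otimes>\<^bsub>AutB S d\<^esub> b) \<in> carrier (AutB S d)" if "x \<in> topspace ?T" for x
    using that ball_aut_comp unfolding T by auto
  fix B C assume B: "B \<in> balls S d"
  have eq: "{x \<in> topspace ?T. fst (case x of (a, b) \<Rightarrow> a \<otimes>\<^bsub>AutB S d\<^esub> b) B = C} =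
      (\<Union>B'\<in>balls S d. {a \<in> carrier (AutB S d). fst a B' = C} \<times> {b \<in> carrier (AutB S d). fst b B = B'})"
    unfolding T using ball_autD(7)[OF _ B] by auto
  show "openin ?T {x \<in> topspace ?T. fst (case x of (a, b) \<Rightarrow> a \<otimes>\<^bsub>AutB S d\<^esub> b) B = C}"
    unfolding eq using openin_AutB_fst B
    by (intro openin_Union) (auto simp: openin_prod_Times_iff simp del: carrier_AutB)
next
  let ?T = "prod_topology (AutB_topology S d) (AutB_topology S d)"
  have T: "topspace ?T = carrier (AutB S d) \<times> carrier (AutB S d)"
    by (simp add: topspace_AutB_topology)
  fix q s :: rat assume q: "0 \<le> q"
  have eq: "{x \<in> topspace ?T. snd (case x of (a, b) \<Rightarrow> a \<otimes>\<^bsub>AutB S d\<^esub> b) q = s} =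
      (\<Union>q'\<in>{q'. 0 \<le> q'}. {a \<in> carrier (AutB S d). snd a q' = s} \<times> {b \<in> carrier (AutB S d). snd b q = q'})"
    unfolding T using dist_order_autD(3)[OF ball_autD(5) q] by auto
  show "openin ?T {x \<in> topspace ?T. snd (case x of (a, b) \<Rightarrow> a \<otimes>\<^bsub>AutB S d\<^esub> b) q = s}"
    unfolding eq using openin_AutB_snd q
    by (intro openin_Union) (auto simp: openin_prod_Times_iff simp del: carrier_AutB)
qed

lemma continuous_map_AutB_inv:
  "continuous_map (AutB_topology S d) (AutB_topology S d) (\<lambda>a. inv\<^bsub>AutB S d\<^esub> a)"
proof (rule continuous_map_AutB_topologyI)
  let ?T = "AutB_topology S d" and ?G = "AutB S d"
  show "inv\<^bsub>?G\<^esub> p \<in> carrier ?G" if "p \<in> topspace ?T" for p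
    using group.inv_closed[OF group_AutB] that by (simp add: topspace_AutB_topology)
  fix B C assume B: "B \<in> balls S d"
  have "fst (inv\<^bsub>?G\<^esub> p) B = C \<longleftrightarrow> C \<in> balls S d \<and> fst p C = B" if "p \<in> carrier ?G" for p
    using that inv_AutB[OF that] inv_on_eq_iff[OF ball_autD(1) B] by (simp add: aut_inv_def)
  then have "{p \<in> topspace ?T. fst (inv\<^bsub>?G\<^esub> p) B = C} =
      (if C \<in> balls S d then {p \<in> carrier ?G. fst p C = B} else {})"
    unfolding topspace_AutB_topology by auto
  then show "openin ?T {p \<in> topspace ?T. fst (inv\<^bsub>?G\<^esub> p) B = C}"
    using openin_AutB_fst[of C S d B] by simp
next
  let ?T = "AutB_topology S d" and ?G = "AutB S d"
  fix q s :: rat assume q: "0 \<le> q"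
  have "snd (inv\<^bsub>?G\<^esub> p) q = s \<longleftrightarrow> 0 \<le> s \<and> snd p s = q" if "p \<in> carrier ?G" for p
    using that inv_AutB[OF that] inv_on_eq_iff[OF dist_order_autD(1)[OF ball_autD(5)], of _ _ _ q] q
    by (simp add: aut_inv_def)
  then have "{p \<in> topspace ?T. snd (inv\<^bsub>?G\<^esub> p) q = s} =
      (if 0 \<le> s then {p \<in> carrier ?G. snd p s = q} else {})"
    unfolding topspace_AutB_topology by auto
  then show "openin ?T {p \<in> topspace ?T. snd (inv\<^bsub>?G\<^esub> p) q = s}"
    using openin_AutB_snd[of s S d q] by simp
qed

lemma topological_group_AutB: "topological_group (AutB S d) (AutB_topology S d)"
  unfolding topological_group_def
  using group_AutB topspace_AutB_topology continuous_map_AutB_mult continuous_map_AutB_inv by blast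

lemma second_countable_AutB_topology:
  assumes "countable (balls S d)"
  shows "second_countable (AutB_topology S d)"
  unfolding AutB_topology_def
proof (rule second_countable_topology_generated_by)
  have "{{p \<in> carrier (AutB S d). fst p B = C} |B C. B \<in> balls S d} \<subseteq>
      insert {} ((\<lambda>(B, C). {p \<in> carrier (AutB S d). fst p B = C}) ` (balls S d \<times> balls S d))"
    using ball_autD(7) by fastforce
  moreover have "{{p \<in> carrier (AutB S d). snd p q = s} |q s. 0 \<le> q} \<subseteq>
      (\<lambda>(q, s). {p \<in> carrier (AutB S d). snd p q = s}) ` UNIV"
    by auto
  ultimately show "countable ({carrier (AutB S d)} \<union> {{p \<in> carrier (AutB S d). fst p B = C} |B C. B \<in> balls S d} \<union>
      {{p \<in> carrier (AutB S d). snd p q = s} |q s. 0 \<le> q})"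
    using assms by (auto elim: countable_subset)
qed

definition code_topology :: "'a set \<Rightarrow> ('a \<Rightarrow> 'a \<Rightarrow> rat) \<Rightarrow>
    ((('a set \<Rightarrow> 'a set) \<times> ('a set \<Rightarrow> 'a set)) \<times> (rat \<Rightarrow> rat)) topology" where
  "code_topology S d = prod_topology
     (prod_topology (product_topology (\<lambda>_. discrete_topology (balls S d)) (balls S d))
        (product_topology (\<lambda>_. discrete_topology (balls S d)) (balls S d)))
     (product_topology (\<lambda>_. discrete_topology {q. 0 \<le> q}) {q. 0 \<le> q})"

definition aut_code :: "'a set \<Rightarrow> ('a \<Rightarrow> 'a \<Rightarrow> rat) \<Rightarrow> ('a set \<Rightarrow> 'a set) \<times> (rat \<Rightarrow> rat) \<Rightarrow>
    (('a set \<Rightarrow> 'a set) \<times> ('a set \<Rightarrow> 'a set)) \<times> (rat \<Rightarrow> rat)" where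
  "aut_code S d p = ((restrict (fst p) (balls S d), restrict (fst (aut_inv (balls S d) p)) (balls S d)),
     restrict (snd p) {q. 0 \<le> q})"

definition aut_decode :: "'a set \<Rightarrow> ('a \<Rightarrow> 'a \<Rightarrow> rat) \<Rightarrow>
    (('a set \<Rightarrow> 'a set) \<times> ('a set \<Rightarrow> 'a set)) \<times> (rat \<Rightarrow> rat) \<Rightarrow> ('a set \<Rightarrow> 'a set) \<times> (rat \<Rightarrow> rat)" where
  "aut_decode S d x = ((\<lambda>B. if B \<in> balls S d then fst (fst x) B else B), (\<lambda>q. if 0 \<le> q then snd x q else q))"

definition aut_codes :: "'a set \<Rightarrow> ('a \<Rightarrow> 'a \<Rightarrow> rat) \<Rightarrow>
    ((('a set \<Rightarrow> 'a set) \<times> ('a set \<Rightarrow> 'a set)) \<times> (rat \<Rightarrow> rat)) set" where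
  "aut_codes S d = {x \<in> topspace (code_topology S d).
     (\<forall>B\<in>balls S d. \<forall>C\<in>balls S d. fst (fst x) B = C \<longrightarrow> snd (fst x) C = B) \<and>
     (\<forall>B\<in>balls S d. \<forall>C\<in>balls S d. snd (fst x) B = C \<longrightarrow> fst (fst x) C = B) \<and>
     (\<forall>B\<in>balls S d. \<forall>C\<in>balls S d. fst (fst x) B \<subseteq> fst (fst x) C \<longleftrightarrow> B \<subseteq> C) \<and>
     (\<forall>B\<in>balls S d. \<forall>C\<in>balls S d. ball_adj S d (fst (fst x) B) (fst (fst x) C) \<longleftrightarrow> ball_adj S d B C) \<and>
     (\<forall>B\<in>balls S d. ball_level S d (fst (fst x) B) = snd x (ball_level S d B)) \<and>
     (\<forall>p\<in>{q. 0 \<le> q}. \<forall>q\<in>{q. 0 \<le> q}. snd x p \<le> snd x q \<longleftrightarrow> p \<le> q) \<and>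
     snd x 0 = 0}"

lemma topspace_code_topology:
  "topspace (code_topology S d) = (PiE (balls S d) (\<lambda>_. balls S d) \<times> PiE (balls S d) (\<lambda>_. balls S d)) \<times>
     PiE {q. 0 \<le> q} (\<lambda>_. {q. 0 \<le> q})"
  unfolding code_topology_def by simp

lemma completely_metrizable_space_code_topology:
  assumes "countable (balls S d)"
  shows "completely_metrizable_space (code_topology S d)"
proof -
  have "completely_metrizable_space (product_topology (\<lambda>_. discrete_topology A) A)"
    if "countable A" for A :: "'b set"
    unfolding completely_metrizable_space_product_topology
    using that by (simp add: completely_metrizable_space_discrete_topology countable_subset[of _ A])
  note cms = this
  have "countable {q :: rat. 0 \<le> q}" by (rule countable_subset[OF subset_UNIV]) simp
  from cms[OF this] cms[OF assms] show ?thesis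
    unfolding code_topology_def by (simp add: completely_metrizable_space_prod_topology)
qed

lemma continuous_map_code_fst:
  "B \<in> balls S d \<Longrightarrow> continuous_map (code_topology S d) (discrete_topology (balls S d)) (\<lambda>x. fst (fst x) B)"
  unfolding code_topology_def
  by (intro continuous_map_compose[OF continuous_map_fst, of _ _ "\<lambda>y. fst y B", unfolded o_def]
      continuous_map_compose[OF continuous_map_fst, of _ _ "\<lambda>f. f B", unfolded o_def]
      continuous_map_product_projection[of B "balls S d" "\<lambda>_. discrete_topology (balls S d)", simplified])

lemma continuous_map_code_inv:
  "B \<in> balls S d \<Longrightarrow> continuous_map (code_topology S d) (discrete_topology (balls S d)) (\<lambda>x. snd (fst x) B)"
  unfolding code_topology_def
  by (intro continuous_map_compose[OF continuous_map_fst, of _ _ "\<lambda>y. snd y B", unfolded o_def]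
      continuous_map_compose[OF continuous_map_snd, of _ _ "\<lambda>f. f B", unfolded o_def]
      continuous_map_product_projection[of B "balls S d" "\<lambda>_. discrete_topology (balls S d)", simplified])

lemma continuous_map_code_dist:
  "0 \<le> q \<Longrightarrow> continuous_map (code_topology S d) (discrete_topology {q. 0 \<le> q}) (\<lambda>x. snd x q)"
  unfolding code_topology_def
  by (intro continuous_map_compose[OF continuous_map_snd, of _ _ "\<lambda>f. f q", unfolded o_def]
      continuous_map_product_projection[of q "{q. 0 \<le> q}" "\<lambda>_. discrete_topology {q. 0 \<le> q}", simplified])

lemma aut_codesD:
  assumes "x \<in> aut_codes S d"
  shows "\<And>B. B \<in> balls S d \<Longrightarrow> fst (fst x) B \<in> balls S d"
    and "\<And>B. B \<in> balls S d \<Longrightarrow> snd (fst x) B \<in> balls S d"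
    and "\<And>q. 0 \<le> q \<Longrightarrow> 0 \<le> snd x q"
    and "fst (fst x) \<in> extensional (balls S d)" "snd (fst x) \<in> extensional (balls S d)"
      "snd x \<in> extensional {q. 0 \<le> q}"
    and "\<And>B. B \<in> balls S d \<Longrightarrow> snd (fst x) (fst (fst x) B) = B"
    and "\<And>B. B \<in> balls S d \<Longrightarrow> fst (fst x) (snd (fst x) B) = B"
    and "\<And>B C. B \<in> balls S d \<Longrightarrow> C \<in> balls S d \<Longrightarrow> fst (fst x) B \<subseteq> fst (fst x) C \<longleftrightarrow> B \<subseteq> C"
    and "\<And>B C. B \<in> balls S d \<Longrightarrow> C \<in> balls S d \<Longrightarrow>
      ball_adj S d (fst (fst x) B) (fst (fst x) C) \<longleftrightarrow> ball_adj S d B C"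
    and "\<And>B. B \<in> balls S d \<Longrightarrow> ball_level S d (fst (fst x) B) = snd x (ball_level S d B)"
    and "\<And>p q. 0 \<le> p \<Longrightarrow> 0 \<le> q \<Longrightarrow> snd x p \<le> snd x q \<longleftrightarrow> p \<le> q"
    and "snd x 0 = 0"
  using assms unfolding aut_codes_def topspace_code_topology mem_Times_iff PiE_iff by auto

lemma bij_betw_fst_aut_decode:
  assumes "x \<in> aut_codes S d"
  shows "bij_betw (fst (aut_decode S d x)) (balls S d) (balls S d)"
  by (rule bij_betw_byWitness[where f'="snd (fst x)"])
    (simp_all add: aut_decode_def aut_codesD[OF assms] image_subset_iff)

lemma aut_decode_aut_code:
  assumes "ball_aut S d p"
  shows "aut_decode S d (aut_code S d p) = p"
proof (rule prod_eqI)
  show "fst (aut_decode S d (aut_code S d p)) = fst p"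
    using ball_autD(2)[OF assms] by (simp add: aut_decode_def aut_code_def fun_eq_iff)
  show "snd (aut_decode S d (aut_code S d p)) = snd p"
    using dist_order_autD(2)[OF ball_autD(5)[OF assms]] by (simp add: aut_decode_def aut_code_def fun_eq_iff)
qed

lemma aut_code_aut_decode:
  assumes x: "x \<in> aut_codes S d"
  shows "aut_code S d (aut_decode S d x) = x"
proof -
  note X = aut_codesD[OF x]
  have "restrict (fst (aut_decode S d x)) (balls S d) = fst (fst x)"
    using X(4) by (simp add: aut_decode_def extensional_def fun_eq_iff)
  moreover have "restrict (inv_on (balls S d) (fst (aut_decode S d x))) (balls S d) = snd (fst x)"
  proof
    fix B show "restrict (inv_on (balls S d) (fst (aut_decode S d x))) (balls S d) B = snd (fst x) B"
      using inv_on_eq_iff[OF bij_betw_fst_aut_decode[OF x]] X(2,5,8)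
      by (cases "B \<in> balls S d") (auto simp: aut_decode_def extensional_def)
  qed
  moreover have "restrict (snd (aut_decode S d x)) {q. 0 \<le> q} = snd x"
    using X(6) by (simp add: aut_decode_def extensional_def fun_eq_iff)
  ultimately show ?thesis by (simp add: aut_code_def aut_inv_def)
qed

lemma continuous_map_aut_code:
  "continuous_map (AutB_topology S d) (code_topology S d) (aut_code S d)"
proof -
  let ?T = "AutB_topology S d"
  have fst: "continuous_map ?T (product_topology (\<lambda>_. discrete_topology (balls S d)) (balls S d))
      (\<lambda>p. restrict (fst p) (balls S d))"
    unfolding continuous_map_componentwise continuous_map_discrete_topology_iff
    using ball_autD(7) openin_AutB_fst by (auto simp: topspace_AutB_topology)
  have "continuous_map ?T (product_topology (\<lambda>_. discrete_topology (balls S d)) (balls S d))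
      (\<lambda>p. restrict (fst (aut_inv (balls S d) p)) (balls S d))"
    using continuous_map_compose[OF continuous_map_AutB_inv fst]
    by (rule continuous_map_eq) (simp add: inv_AutB topspace_AutB_topology)
  moreover have "continuous_map ?T (product_topology (\<lambda>_. discrete_topology {q. 0 \<le> q}) {q. 0 \<le> q})
      (\<lambda>p. restrict (snd p) {q. 0 \<le> q})"
    unfolding continuous_map_componentwise continuous_map_discrete_topology_iff
    using dist_order_autD(3)[OF ball_autD(5)] openin_AutB_snd by (auto simp: topspace_AutB_topology)
  ultimately show ?thesis
    unfolding code_topology_def aut_code_def using fst by (intro continuous_map_pairedI)
qed

context urysohn_completion
begin

lemma closedin_aut_codes: "closedin (code_topology U d) (aut_codes U d)"
proof -
  let ?T = "code_topology U d"
  note g = continuous_map_code_fst[of _ U d] and h = continuous_map_code_inv[of _ U d]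
    and l = continuous_map_code_dist[of _ U d]
  have level: "0 \<le> ball_level U d B" if "B \<in> balls U d" for B using ball_level_pos[OF that] by simp
  show ?thesis
    unfolding aut_codes_def
  proof (intro closedin_Collect_conj closedin_Collect_Ball)
    fix B C assume "B \<in> balls U d" "C \<in> balls U d"
    show "closedin ?T {x \<in> topspace ?T. fst (fst x) B = C \<longrightarrow> snd (fst x) C = B}"
      using closedin_discrete_relation[OF g h, of B C "\<lambda>a b. a = C \<longrightarrow> b = B"] \<open>B \<in> _\<close> \<open>C \<in> _\<close> by simp
    show "closedin ?T {x \<in> topspace ?T. snd (fst x) B = C \<longrightarrow> fst (fst x) C = B}"
      using closedin_discrete_relation[OF h g, of B C "\<lambda>a b. a = C \<longrightarrow> b = B"] \<open>B \<in> _\<close> \<open>C \<in> _\<close> by simp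
    show "closedin ?T {x \<in> topspace ?T. fst (fst x) B \<subseteq> fst (fst x) C \<longleftrightarrow> B \<subseteq> C}"
      using closedin_discrete_relation[OF g g, of B C "\<lambda>a b. a \<subseteq> b \<longleftrightarrow> B \<subseteq> C"] \<open>B \<in> _\<close> \<open>C \<in> _\<close> by simp
    show "closedin ?T {x \<in> topspace ?T. ball_adj U d (fst (fst x) B) (fst (fst x) C) \<longleftrightarrow> ball_adj U d B C}"
      using closedin_discrete_relation[OF g g, of B C "\<lambda>a b. ball_adj U d a b \<longleftrightarrow> ball_adj U d B C"]
        \<open>B \<in> _\<close> \<open>C \<in> _\<close> by simp
  next
    fix B assume "B \<in> balls U d"
    then show "closedin ?T {x \<in> topspace ?T. ball_level U d (fst (fst x) B) = snd x (ball_level U d B)}"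
      using closedin_discrete_relation[OF g l, of B "ball_level U d B" "\<lambda>a b. ball_level U d a = b"] level
      by simp
  next
    fix p q :: rat assume "p \<in> {q. 0 \<le> q}" "q \<in> {q. 0 \<le> q}"
    then show "closedin ?T {x \<in> topspace ?T. snd x p \<le> snd x q \<longleftrightarrow> p \<le> q}"
      using closedin_discrete_relation[OF l l, of p q "\<lambda>a b. a \<le> b \<longleftrightarrow> p \<le> q"] by simp
  next
    show "closedin ?T {x \<in> topspace ?T. snd x 0 = 0}"
      using closedin_discrete_preimage[OF l[of 0], of "\<lambda>a. a = 0"] by simp
  qed
qed

lemma aut_code_in_aut_codes:
  assumes p: "ball_aut U d p"
  shows "aut_code U d p \<in> aut_codes U d"
proof -
  note P = ball_autD[OF p] and D = dist_order_autD[OF ball_autD(5)[OF p]]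
  let ?h = "inv_on (balls U d) (fst p)"
  have h: "?h B \<in> balls U d" "fst p (?h B) = B" "?h (fst p B) = B" if "B \<in> balls U d" for B
    using that bij_betw_apply[OF bij_betw_inv_on[OF P(1)]] f_inv_on_f[OF P(1,2)] inv_on_f_f[OF P(1,2)]
    by auto
  show ?thesis
    unfolding aut_codes_def topspace_code_topology aut_code_def aut_inv_def
    using P(3,4,6,7) h D(3) dist_order_aut_le_iff[OF P(5)] dist_order_aut_zero[OF P(5)] ball_level_pos
    by (auto simp: less_imp_le)
qed

lemma dist_order_aut_aut_decode:
  assumes x: "x \<in> aut_codes U d"
  shows "dist_order_aut (snd (aut_decode U d x))"
proof -
  note X = aut_codesD[OF x]
  let ?l = "snd (aut_decode U d x)"
  have "?l ` {q. 0 \<le> q} = {q. 0 \<le> q}"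
  proof
    show "?l ` {q. 0 \<le> q} \<subseteq> {q. 0 \<le> q}" using X(3) by (auto simp: aut_decode_def)
    show "{q. 0 \<le> q} \<subseteq> ?l ` {q. 0 \<le> q}"
    proof
      fix t :: rat assume t: "t \<in> {q. 0 \<le> q}"
      show "t \<in> ?l ` {q. 0 \<le> q}"
      proof (cases "t = 0")
        case True
        then show ?thesis using X(13) by (force simp: aut_decode_def)
      next
        case False
        \<comment> \<open>every positive distance is the level of a ball, and the code is onto the balls\<close>
        then have "0 < t" using t by simp
        obtain c where "c \<in> U" using U_nonempty by blast
        then have B: "trace_ball U d c t \<in> balls U d" "ball_level U d (trace_ball U d c t) = t"
          using trace_ball_in_balls ball_level_trace_ball \<open>0 < t\<close> U_subset_X by auto
        let ?C = "snd (fst x) (trace_ball U d c t)"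
        have "t = snd x (ball_level U d ?C)" using X(11)[OF X(2)[OF B(1)]] X(8)[OF B(1)] B(2) by simp
        then show ?thesis
          using ball_level_pos[OF X(2)[OF B(1)]] by (auto simp: aut_decode_def intro!: image_eqI)
      qed
    qed
  qed
  moreover have "inj_on ?l {q. 0 \<le> q}"
  proof (rule inj_onI)
    fix a b assume "a \<in> {q. 0 \<le> q}" "b \<in> {q. 0 \<le> q}" "?l a = ?l b"
    then show "a = b" using X(12)[of a b] X(12)[of b a] by (simp add: aut_decode_def)
  qed
  ultimately show ?thesis
    unfolding dist_order_aut_def bij_betw_def using X(12) by (simp add: aut_decode_def)
qed

lemma ball_aut_aut_decode:
  assumes x: "x \<in> aut_codes U d"
  shows "ball_aut U d (aut_decode U d x)"
  unfolding ball_aut_def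
  using bij_betw_fst_aut_decode[OF x] dist_order_aut_aut_decode[OF x] aut_codesD(1,9,10,11)[OF x]
    ball_level_pos
  by (simp add: aut_decode_def less_imp_le)

lemma continuous_map_aut_decode:
  "continuous_map (subtopology (code_topology U d) (aut_codes U d)) (AutB_topology U d) (aut_decode U d)"
proof (rule continuous_map_AutB_topologyI)
  let ?Y = "subtopology (code_topology U d) (aut_codes U d)"
  have Y: "topspace ?Y = aut_codes U d"
    using closedin_subset[OF closedin_aut_codes] by auto
  show "aut_decode U d x \<in> carrier (AutB U d)" if "x \<in> topspace ?Y" for x
    using that ball_aut_aut_decode unfolding Y by simp
  show "openin ?Y {x \<in> topspace ?Y. fst (aut_decode U d x) B = C}" if "B \<in> balls U d" for B C
    using continuous_map_from_subtopology[OF continuous_map_code_fst[OF that]] that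
    unfolding continuous_map_discrete_topology_iff by (simp add: aut_decode_def)
  show "openin ?Y {x \<in> topspace ?Y. snd (aut_decode U d x) q = s}" if "0 \<le> q" for q s
    using continuous_map_from_subtopology[OF continuous_map_code_dist[OF that, of U d]] that
    unfolding continuous_map_discrete_topology_iff by (simp add: aut_decode_def)
qed

lemma countable_balls: "countable (balls U d)"
proof -
  have "balls U d \<subseteq> (\<lambda>(x, y). ball_in U d x y) ` (U \<times> U)" unfolding balls_def by auto
  then show ?thesis by (rule countable_subset) (simp add: countable_U)
qed

lemma completely_metrizable_space_AutB_topology: "completely_metrizable_space (AutB_topology U d)"
proof -
  have "homeomorphic_maps (AutB_topology U d) (subtopology (code_topology U d) (aut_codes U d))
      (aut_code U d) (aut_decode U d)"
    unfolding homeomorphic_maps_def continuous_map_in_subtopology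
    using continuous_map_aut_code continuous_map_aut_decode aut_code_in_aut_codes aut_decode_aut_code
      aut_code_aut_decode closedin_subset[OF closedin_aut_codes]
    by (auto simp: topspace_AutB_topology)
  then have "AutB_topology U d homeomorphic_space subtopology (code_topology U d) (aut_codes U d)"
    unfolding homeomorphic_space_def by blast
  moreover have "completely_metrizable_space (subtopology (code_topology U d) (aut_codes U d))"
    using completely_metrizable_space_closedin[OF completely_metrizable_space_code_topology[OF countable_balls]
        closedin_aut_codes] .
  ultimately show ?thesis using homeomorphic_completely_metrizable_space by blast
qed

lemma Polish_group_AutB: "Polish_group (AutB U d) (AutB_topology U d)"
  unfolding Polish_group_def Polish_space_top_def
  using topological_group_AutB completely_metrizable_space_AutB_topology
    second_countable_imp_separable_space[OF second_countable_AutB_topology[OF countable_balls]]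
  by blast

end

lemma topological_group_transfer:
  assumes G: "group G" "topspace T = carrier G" and h: "h \<in> iso G H" "homeomorphic_map T S h"
    and H: "topological_group H S"
  shows "topological_group G T"
proof -
  obtain k where k: "homeomorphic_maps T S h k" using h(2) homeomorphic_map_maps by blast
  then have ch: "continuous_map T S h" and ck: "continuous_map S T k"
    and kh: "\<And>x. x \<in> carrier G \<Longrightarrow> k (h x) = x"
    using G(2) unfolding homeomorphic_maps_def by auto
  have mult_H: "continuous_map (prod_topology S S) S (\<lambda>(a, b). a \<otimes>\<^bsub>H\<^esub> b)"
    and inv_H: "continuous_map S S (\<lambda>a. inv\<^bsub>H\<^esub> a)"
    using H unfolding topological_group_def by auto
  interpret group_hom G H h
    using G(1) H h(1) by (simp add: group_hom_def group_hom_axioms_def iso_def topological_group_def)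
  have pair: "continuous_map (prod_topology T T) (prod_topology S S) (\<lambda>x. (h (fst x), h (snd x)))"
    using continuous_map_compose[OF continuous_map_fst ch] continuous_map_compose[OF continuous_map_snd ch]
    by (intro continuous_map_pairedI) (simp_all add: o_def)
  have "continuous_map (prod_topology T T) T (\<lambda>(a, b). a \<otimes>\<^bsub>G\<^esub> b)"
  proof (rule continuous_map_eq[OF continuous_map_compose[OF pair continuous_map_compose[OF mult_H ck]]])
    fix x assume "x \<in> topspace (prod_topology T T)"
    then obtain a b where "x = (a, b)" "a \<in> carrier G" "b \<in> carrier G" using G(2) by auto
    then show "(k \<circ> (\<lambda>(a, b). a \<otimes>\<^bsub>H\<^esub> b) \<circ> (\<lambda>x. (h (fst x), h (snd x)))) x = (case x of (a, b) \<Rightarrow> a \<otimes>\<^bsub>G\<^esub> b)"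
      using kh[of "a \<otimes>\<^bsub>G\<^esub> b"] hom_mult[of a b] by simp
  qed
  moreover have "continuous_map T T (\<lambda>a. inv\<^bsub>G\<^esub> a)"
  proof (rule continuous_map_eq[OF continuous_map_compose[OF ch continuous_map_compose[OF inv_H ck]]])
    fix a assume "a \<in> topspace T"
    then have "a \<in> carrier G" using G(2) by simp
    then show "(k \<circ> (\<lambda>a. inv\<^bsub>H\<^esub> a) \<circ> h) a = inv\<^bsub>G\<^esub> a"
      using kh[of "inv\<^bsub>G\<^esub> a"] hom_inv[of a] by simp
  qed
  ultimately show ?thesis unfolding topological_group_def using G by simp
qed

theorem proposition3p23:
  fixes U X :: "'a set" and d :: "'a \<Rightarrow> 'a \<Rightarrow> rat"
  assumes "rational_Urysohn_ultrametric U d"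
    and "is_completion U X d"
  shows "Polish_group_iso (AutM X d) (AutM_topology X d) (AutB U d) (AutB_topology U d)
           (beta_bar U X d)"
proof -
  interpret urysohn_completion U X d using assms by unfold_locales
  have B: "topological_group (AutB U d) (AutB_topology U d)" "Polish_space_top (AutB_topology U d)"
    using Polish_group_AutB unfolding Polish_group_def by auto
  have "AutM_topology X d homeomorphic_space AutB_topology U d"
    using homeomorphic_map_beta_bar by (rule homeomorphic_map_imp_homeomorphic_space)
  then have "Polish_space_top (AutM_topology X d)"
    using B(2) homeomorphic_completely_metrizable_space[of "AutM_topology X d" "AutB_topology U d"]
      homeomorphic_separable_space[of "AutM_topology X d" "AutB_topology U d"]
    unfolding Polish_space_top_def by simp
  moreover have "topological_group (AutM X d) (AutM_topology X d)"
    using topological_group_transfer[OF group_AutM topspace_AutM_topology beta_bar_iso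
        homeomorphic_map_beta_bar B(1)] .
  ultimately show ?thesis
    unfolding Polish_group_iso_def Polish_group_def
    using B beta_bar_iso homeomorphic_map_beta_bar by simp
qed

end
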